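(* Assume $n=\tilde\Omega(dL^2)$ and $\|I-A\|_{op}\ge\Theta\Big(\sqrt{\frac{L^2d\log^2d}{n}}\Big)$. Then for each integer $0\le i\le 2L-1$, $$\mathbb E\big[(I-SA)^iS(I-SA)^{2L-1-i}\big]=(I-A)^{2L-1}+\|I-A\|^{2L-1}\Delta,$$ where $\Delta$ has operator norm $O\big(\frac1{\log d}\big)$.
   Context: $S=\frac1n\sum_{i=1}^n\mathbf x_i\mathbf x_i^\top$ with $\mathbf x_i$ i.i.d. $\mathcal N(0,I_d)$. $A\in\mathbb R^{d\times d}$ is a (symmetric) parameter matrix and $L\ge1$ is an integer. $\|\cdot\|$ denotes the operator norm, and asymptotic notation is in $d$; $\tilde\Omega$ hides logarithmic factors. *)

theory Defs
  imports "HOL-Probability.Probability"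
begin

text \<open>d x d real matrices are represented as functions nat => nat => real; only entries
with indices < d are relevant.\<close>

definition mat_id :: "nat \<Rightarrow> nat \<Rightarrow> real" where
  "mat_id = (\<lambda>i j. if i = j then 1 else 0)"

definition mat_mult :: "nat \<Rightarrow> (nat \<Rightarrow> nat \<Rightarrow> real) \<Rightarrow> (nat \<Rightarrow> nat \<Rightarrow> real) \<Rightarrow> (nat \<Rightarrow> nat \<Rightarrow> real)" where
  "mat_mult d M N = (\<lambda>i j. \<Sum>k<d. M i k * N k j)"

fun mat_pow :: "nat \<Rightarrow> (nat \<Rightarrow> nat \<Rightarrow> real) \<Rightarrow> nat \<Rightarrow> (nat \<Rightarrow> nat \<Rightarrow> real)" where
  "mat_pow d M 0 = mat_id"
| "mat_pow d M (Suc k) = mat_mult d (mat_pow d M k) M"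

definition mat_sub :: "(nat \<Rightarrow> nat \<Rightarrow> real) \<Rightarrow> (nat \<Rightarrow> nat \<Rightarrow> real) \<Rightarrow> (nat \<Rightarrow> nat \<Rightarrow> real)" where
  "mat_sub M N = (\<lambda>i j. M i j - N i j)"

definition op_norm :: "nat \<Rightarrow> (nat \<Rightarrow> nat \<Rightarrow> real) \<Rightarrow> real" where
  "op_norm d M = Sup ((\<lambda>v. sqrt (\<Sum>i<d. (\<Sum>j<d. M i j * v j)\<^sup>2)) ` {v. (\<Sum>j<d. (v j)\<^sup>2) = 1})"

definition sym_mat :: "nat \<Rightarrow> (nat \<Rightarrow> nat \<Rightarrow> real) \<Rightarrow> bool" where
  "sym_mat d M \<longleftrightarrow> (\<forall>i<d. \<forall>j<d. M i j = M j i)"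

text \<open>Sample space: \<omega> (k, j) is the j-th coordinate of the k-th sample x_k, all i.i.d. N(0,1),
so x_1..x_n are i.i.d. N(0, I_d).\<close>
definition gauss_samples :: "nat \<Rightarrow> nat \<Rightarrow> (nat \<times> nat \<Rightarrow> real) measure" where
  "gauss_samples n d = PiM ({..<n} \<times> {..<d}) (\<lambda>_. density lborel std_normal_density)"

definition emp_cov :: "nat \<Rightarrow> nat \<Rightarrow> (nat \<times> nat \<Rightarrow> real) \<Rightarrow> (nat \<Rightarrow> nat \<Rightarrow> real)" where
  "emp_cov n d \<omega> = (\<lambda>i j. (1 / real n) * (\<Sum>k<n. \<omega> (k, i) * \<omega> (k, j)))"

definition mat_expect :: "nat \<Rightarrow> nat \<Rightarrow> ((nat \<times> nat \<Rightarrow> real) \<Rightarrow> (nat \<Rightarrow> nat \<Rightarrow> real)) \<Rightarrow> (nat \<Rightarrow> nat \<Rightarrow> real)" where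
  "mat_expect n d F = (\<lambda>i j. integral\<^sup>L (gauss_samples n d) (\<lambda>\<omega>. F \<omega> i j))"

end

theory Submission
  imports Defs
begin

text \<open>Write \<open>S = I + W\<close>, \<open>B = I - A\<close>, \<open>e = \<parallel>B\<parallel>\<close> and \<open>X = \<parallel>W\<parallel>\<close>. Since \<open>I - SA = B - WA\<close>,
  the product \<open>(I - SA)\<^sup>i S (I - SA)\<^sup>j\<close> with \<open>i + j = m\<close> differs from \<open>B\<^sup>m\<close> in operator norm by
  at most \<open>(e + X\<parallel>A\<parallel>)\<^sup>m (1 + X) - e\<^sup>m \<le> e\<^sup>m (exp (\<theta> X) - 1)\<close> with \<open>\<theta> = m\<parallel>A\<parallel>/e + 1\<close>, so the
  normalised error \<open>\<Delta>\<close> has norm at most \<open>E exp (\<theta> X) - 1\<close>. A net of size \<open>exp (11 d)\<close> on the unit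
  sphere bounds \<open>X\<close> by twice the largest \<open>|z\<^sup>T W z|\<close> over the net, and each \<open>z\<^sup>T W z\<close> is an average of
  \<open>n\<close> independent centred scaled \<open>\<chi>\<^sup>2\<^sub>1\<close> variables, whose moment generating function is
  \<open>exp (O(\<mu>\<^sup>2/n))\<close>. Splitting \<open>exp (\<theta> X)\<close> at \<open>X = 300 sqrt (d/n)\<close> leaves a bulk term
  \<open>exp (300 \<theta> sqrt (d/n)) - 1 = O(1 / log d)\<close> and, after tilting by \<open>sqrt (d n)\<close>, a tail term
  \<open>exp (-\<Omega>(d))\<close> that beats the size of the net.\<close>

section \<open>Vectors and matrices on the index set \<open>{..<d}\<close>\<close>

definition vec_norm :: "nat \<Rightarrow> (nat \<Rightarrow> real) \<Rightarrow> real" where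
  "vec_norm d v = L2_set v {..<d}"

definition mat_vec :: "nat \<Rightarrow> (nat \<Rightarrow> nat \<Rightarrow> real) \<Rightarrow> (nat \<Rightarrow> real) \<Rightarrow> (nat \<Rightarrow> real)" where
  "mat_vec d M v = (\<lambda>i. \<Sum>j<d. M i j * v j)"

definition bilin :: "nat \<Rightarrow> (nat \<Rightarrow> real) \<Rightarrow> (nat \<Rightarrow> nat \<Rightarrow> real) \<Rightarrow> (nat \<Rightarrow> real) \<Rightarrow> real" where
  "bilin d w M v = (\<Sum>i<d. w i * mat_vec d M v i)"

definition mat_eq_on :: "nat \<Rightarrow> (nat \<Rightarrow> nat \<Rightarrow> real) \<Rightarrow> (nat \<Rightarrow> nat \<Rightarrow> real) \<Rightarrow> bool" where
  "mat_eq_on d M N \<longleftrightarrow> (\<forall>i<d. \<forall>j<d. M i j = N i j)"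

definition mat_add :: "(nat \<Rightarrow> nat \<Rightarrow> real) \<Rightarrow> (nat \<Rightarrow> nat \<Rightarrow> real) \<Rightarrow> (nat \<Rightarrow> nat \<Rightarrow> real)" where
  "mat_add M N = (\<lambda>i j. M i j + N i j)"

definition mat_neg :: "(nat \<Rightarrow> nat \<Rightarrow> real) \<Rightarrow> (nat \<Rightarrow> nat \<Rightarrow> real)" where
  "mat_neg M = (\<lambda>i j. - M i j)"

definition unit_vec :: "nat \<Rightarrow> nat \<Rightarrow> real" where
  "unit_vec p = (\<lambda>j. if j = p then 1 else 0)"

definition frobenius_norm :: "nat \<Rightarrow> (nat \<Rightarrow> nat \<Rightarrow> real) \<Rightarrow> real" where
  "frobenius_norm d M = L2_set (\<lambda>i. vec_norm d (M i)) {..<d}"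

lemma vec_norm_nonneg [simp]: "0 \<le> vec_norm d v"
  by (simp add: vec_norm_def)

lemma vec_norm_sq: "(vec_norm d v)\<^sup>2 = (\<Sum>j<d. (v j)\<^sup>2)"
  unfolding vec_norm_def L2_set_def by (simp add: sum_nonneg)

lemma vec_norm_eq_0_iff: "vec_norm d v = 0 \<longleftrightarrow> (\<forall>j<d. v j = 0)"
  unfolding vec_norm_def by (subst L2_set_eq_0_iff) auto

lemma vec_norm_scale: "0 \<le> c \<Longrightarrow> vec_norm d (\<lambda>j. c * v j) = c * vec_norm d v"
  unfolding vec_norm_def by (simp add: L2_set_right_distrib)

lemma vec_norm_uminus: "vec_norm d (\<lambda>i. - v i) = vec_norm d v"
  by (simp add: vec_norm_def L2_set_def)

lemma vec_norm_unit_vec: "p < d \<Longrightarrow> vec_norm d (unit_vec p) = 1"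
proof -
  assume "p < d"
  then have "(\<Sum>j<d. (unit_vec p j)\<^sup>2) = (\<Sum>j\<in>{p}. (unit_vec p j)\<^sup>2)"
    by (intro sum.mono_neutral_right) (auto simp: unit_vec_def)
  then show ?thesis by (simp add: vec_norm_def L2_set_def unit_vec_def)
qed

lemma normalize_vec:
  assumes "vec_norm d v \<noteq> 0"
  shows "vec_norm d (\<lambda>j. (1 / vec_norm d v) * v j) = 1"
  using assms by (subst vec_norm_scale) auto

lemma abs_inner_le: "\<bar>\<Sum>i<d. w i * u i\<bar> \<le> vec_norm d w * vec_norm d u"
proof -
  have "\<bar>\<Sum>i<d. w i * u i\<bar> \<le> (\<Sum>i<d. \<bar>w i\<bar> * \<bar>u i\<bar>)"
    by (rule order_trans[OF sum_abs]) (simp add: abs_mult)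
  also have "\<dots> \<le> vec_norm d w * vec_norm d u"
    unfolding vec_norm_def by (rule L2_set_mult_ineq)
  finally show ?thesis .
qed

lemma vec_norm_mat_vec_le_frobenius: "vec_norm d (mat_vec d M v) \<le> frobenius_norm d M * vec_norm d v"
proof -
  have "vec_norm d (mat_vec d M v) = L2_set (\<lambda>i. \<bar>mat_vec d M v i\<bar>) {..<d}"
    by (simp add: vec_norm_def L2_set_def)
  also have "\<dots> \<le> L2_set (\<lambda>i. vec_norm d (M i) * vec_norm d v) {..<d}"
    unfolding mat_vec_def by (rule L2_set_mono) (auto simp: abs_inner_le)
  also have "\<dots> = frobenius_norm d M * vec_norm d v"
    unfolding frobenius_norm_def by (subst L2_set_left_distrib) auto
  finally show ?thesis .
qed

lemma op_norm_eq_Sup: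
  "op_norm d M = Sup ((\<lambda>v. vec_norm d (mat_vec d M v)) ` {v. vec_norm d v = 1})"
proof -
  have "{v. (\<Sum>j<d. (v j)\<^sup>2) = 1} = {v. vec_norm d v = 1}"
    by (auto simp: vec_norm_def L2_set_def)
  then show ?thesis unfolding op_norm_def vec_norm_def mat_vec_def L2_set_def by simp
qed

lemma bdd_above_mat_vec_norms: "bdd_above ((\<lambda>v. vec_norm d (mat_vec d M v)) ` {v. vec_norm d v = 1})"
proof (rule bdd_aboveI)
  fix x assume "x \<in> (\<lambda>v. vec_norm d (mat_vec d M v)) ` {v. vec_norm d v = 1}"
  then obtain v where "vec_norm d v = 1" "x = vec_norm d (mat_vec d M v)" by auto
  then show "x \<le> frobenius_norm d M" using vec_norm_mat_vec_le_frobenius[of d M v] by simp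
qed

text \<open>For \<open>d = 0\<close> the unit sphere is empty and \<^const>\<open>op_norm\<close> is the junk value \<open>Sup {}\<close>; hence
  the hypothesis \<open>0 < d\<close> below.\<close>

lemma vec_norm_mat_vec_le_op_norm:
  "vec_norm d v = 1 \<Longrightarrow> vec_norm d (mat_vec d M v) \<le> op_norm d M"
  unfolding op_norm_eq_Sup by (rule cSup_upper[OF _ bdd_above_mat_vec_norms]) auto

lemma op_norm_nonneg: "0 < d \<Longrightarrow> 0 \<le> op_norm d M"
  using vec_norm_mat_vec_le_op_norm[OF vec_norm_unit_vec, of 0 d M] vec_norm_nonneg[of d]
  by (meson order_trans)

lemma op_norm_le:
  assumes "0 < d" "\<And>v. vec_norm d v = 1 \<Longrightarrow> vec_norm d (mat_vec d M v) \<le> K"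
  shows "op_norm d M \<le> K"
  unfolding op_norm_eq_Sup by (rule cSup_least) (use assms vec_norm_unit_vec in auto)

lemma mat_vec_scale: "mat_vec d M (\<lambda>j. c * v j) = (\<lambda>i. c * mat_vec d M v i)"
  unfolding mat_vec_def by (auto simp: sum_distrib_left algebra_simps)

lemma vec_norm_mat_vec_le: "vec_norm d (mat_vec d M v) \<le> op_norm d M * vec_norm d v"
proof (cases "vec_norm d v = 0")
  case True
  then have "mat_vec d M v = (\<lambda>i. 0)"
    unfolding mat_vec_def vec_norm_eq_0_iff by (auto intro!: ext sum.neutral)
  then show ?thesis using True by (simp add: vec_norm_def L2_set_def)
next
  case False
  define t where "t = vec_norm d v"
  have t: "0 < t" using False vec_norm_nonneg[of d v] unfolding t_def by linarith
  define u where "u = (\<lambda>j. (1 / t) * v j)"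
  have "vec_norm d (mat_vec d M u) \<le> op_norm d M"
    using normalize_vec[OF False] unfolding t_def u_def by (rule vec_norm_mat_vec_le_op_norm)
  moreover have "vec_norm d (mat_vec d M u) = (1 / t) * vec_norm d (mat_vec d M v)"
    unfolding u_def mat_vec_scale using t by (subst vec_norm_scale) auto
  ultimately have "(1 / t) * vec_norm d (mat_vec d M v) \<le> op_norm d M" by simp
  then show ?thesis using t unfolding t_def[symmetric] by (simp add: field_simps)
qed

lemma op_norm_cong: "mat_eq_on d M N \<Longrightarrow> op_norm d M = op_norm d N"
proof -
  assume MN: "mat_eq_on d M N"
  have "vec_norm d (mat_vec d M v) = vec_norm d (mat_vec d N v)" for v
    unfolding vec_norm_def mat_vec_def using MN by (intro L2_set_cong) (auto simp: mat_eq_on_def)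
  then show ?thesis unfolding op_norm_eq_Sup by simp
qed

lemma mat_vec_add: "mat_vec d (mat_add M N) v = (\<lambda>i. mat_vec d M v i + mat_vec d N v i)"
  unfolding mat_vec_def mat_add_def by (auto simp: sum.distrib algebra_simps)

lemma mat_vec_neg: "mat_vec d (mat_neg M) v = (\<lambda>i. - mat_vec d M v i)"
  unfolding mat_vec_def mat_neg_def by (auto simp: sum_negf)

lemma mat_vec_mult: "mat_vec d (mat_mult d M N) v = mat_vec d M (mat_vec d N v)"
  unfolding mat_vec_def mat_mult_def
  by (auto simp: sum_distrib_left sum_distrib_right mult.assoc intro!: ext sum.swap[THEN trans])

lemma mat_vec_id: "i < d \<Longrightarrow> mat_vec d mat_id v i = v i"
  unfolding mat_vec_def mat_id_def
  by (simp add: if_distrib[where f = "\<lambda>x. x * _"] sum.delta cong: if_cong)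

lemma op_norm_add: "0 < d \<Longrightarrow> op_norm d (mat_add M N) \<le> op_norm d M + op_norm d N"
proof (rule op_norm_le)
  fix v assume v: "vec_norm d v = 1"
  have "vec_norm d (mat_vec d (mat_add M N) v) \<le> vec_norm d (mat_vec d M v) + vec_norm d (mat_vec d N v)"
    unfolding mat_vec_add vec_norm_def by (rule L2_set_triangle_ineq)
  also have "\<dots> \<le> op_norm d M + op_norm d N"
    using vec_norm_mat_vec_le_op_norm[OF v] by (intro add_mono)
  finally show "vec_norm d (mat_vec d (mat_add M N) v) \<le> op_norm d M + op_norm d N" .
qed

lemma op_norm_neg: "0 < d \<Longrightarrow> op_norm d (mat_neg M) \<le> op_norm d M"
  by (rule op_norm_le) (simp_all add: mat_vec_neg vec_norm_uminus vec_norm_mat_vec_le_op_norm)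

lemma op_norm_sub: "0 < d \<Longrightarrow> op_norm d (mat_sub M N) \<le> op_norm d M + op_norm d N"
proof -
  assume d: "0 < d"
  have "mat_sub M N = mat_add M (mat_neg N)" by (auto simp: mat_sub_def mat_add_def mat_neg_def)
  then show ?thesis using op_norm_add[OF d, of M "mat_neg N"] op_norm_neg[OF d, of N] by simp
qed

lemma op_norm_mult: "0 < d \<Longrightarrow> op_norm d (mat_mult d M N) \<le> op_norm d M * op_norm d N"
proof (rule op_norm_le)
  fix v assume d: "0 < d" and v: "vec_norm d v = 1"
  have "vec_norm d (mat_vec d (mat_mult d M N) v) \<le> op_norm d M * vec_norm d (mat_vec d N v)"
    unfolding mat_vec_mult by (rule vec_norm_mat_vec_le)
  also have "\<dots> \<le> op_norm d M * op_norm d N"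
    using vec_norm_mat_vec_le_op_norm[OF v] op_norm_nonneg[OF d, of M] by (simp add: mult_left_mono)
  finally show "vec_norm d (mat_vec d (mat_mult d M N) v) \<le> op_norm d M * op_norm d N" .
qed

lemma op_norm_scale_le: "0 < d \<Longrightarrow> 0 \<le> c \<Longrightarrow> op_norm d (\<lambda>i j. c * M i j) \<le> c * op_norm d M"
proof (rule op_norm_le)
  fix v assume c: "0 \<le> c" and v: "vec_norm d v = 1"
  have "mat_vec d (\<lambda>i j. c * M i j) v = (\<lambda>i. c * mat_vec d M v i)"
    unfolding mat_vec_def by (auto simp: sum_distrib_left mult.assoc)
  then show "vec_norm d (mat_vec d (\<lambda>i j. c * M i j) v) \<le> c * op_norm d M"
    using vec_norm_mat_vec_le_op_norm[OF v, of M] c by (simp add: vec_norm_scale mult_left_mono)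
qed

lemma op_norm_id_le: "0 < d \<Longrightarrow> op_norm d mat_id \<le> 1"
proof (rule op_norm_le)
  fix v assume v: "vec_norm d v = 1"
  have "vec_norm d (mat_vec d mat_id v) = vec_norm d v"
    unfolding vec_norm_def by (rule L2_set_cong) (auto simp: mat_vec_id)
  then show "vec_norm d (mat_vec d mat_id v) \<le> 1" using v by simp
qed

lemma op_norm_zero_le: "0 < d \<Longrightarrow> op_norm d (\<lambda>i j. 0) \<le> 0"
  by (rule op_norm_le) (auto simp: mat_vec_def vec_norm_def L2_set_def)

lemma abs_bilin_le: "\<bar>bilin d w M v\<bar> \<le> vec_norm d w * op_norm d M * vec_norm d v"
proof -
  have "\<bar>bilin d w M v\<bar> \<le> vec_norm d w * vec_norm d (mat_vec d M v)"
    unfolding bilin_def by (rule abs_inner_le)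
  also have "\<dots> \<le> vec_norm d w * (op_norm d M * vec_norm d v)"
    by (rule mult_left_mono[OF vec_norm_mat_vec_le]) simp
  finally show ?thesis by (simp add: mult.assoc)
qed

lemma bilin_expand: "bilin d w M v = (\<Sum>i<d. \<Sum>j<d. w i * M i j * v j)"
  unfolding bilin_def mat_vec_def by (simp add: sum_distrib_left mult.assoc)

lemma bilin_unit_vec: "p < d \<Longrightarrow> q < d \<Longrightarrow> bilin d (unit_vec p) M (unit_vec q) = M p q"
  unfolding bilin_expand unit_vec_def
  by (simp add: if_distrib[where f = "\<lambda>x. x * _"] if_distrib[where f = "\<lambda>x. _ * x"] cong: if_cong)

lemma abs_entry_le_op_norm: "p < d \<Longrightarrow> q < d \<Longrightarrow> \<bar>M p q\<bar> \<le> op_norm d M"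
  using abs_bilin_le[of d "unit_vec p" M "unit_vec q"] by (simp add: bilin_unit_vec vec_norm_unit_vec)


lemma mat_eq_on_refl [simp]: "mat_eq_on d M M"
  by (simp add: mat_eq_on_def)

lemma mat_eq_on_sym: "mat_eq_on d M N \<Longrightarrow> mat_eq_on d N M"
  by (simp add: mat_eq_on_def)

lemma mat_eq_on_trans: "mat_eq_on d M N \<Longrightarrow> mat_eq_on d N P \<Longrightarrow> mat_eq_on d M P"
  by (simp add: mat_eq_on_def)

lemma mat_eq_on_mult:
  "mat_eq_on d M M' \<Longrightarrow> mat_eq_on d N N' \<Longrightarrow> mat_eq_on d (mat_mult d M N) (mat_mult d M' N')"
  by (auto simp: mat_eq_on_def mat_mult_def intro!: sum.cong)

lemma mat_eq_on_sub: "mat_eq_on d M M' \<Longrightarrow> mat_eq_on d N N' \<Longrightarrow> mat_eq_on d (mat_sub M N) (mat_sub M' N')"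
  by (auto simp: mat_eq_on_def mat_sub_def)

lemma mat_mult_assoc: "mat_mult d (mat_mult d M N) P = mat_mult d M (mat_mult d N P)"
  unfolding mat_mult_def
  by (auto simp: sum_distrib_left sum_distrib_right mult.assoc intro!: ext sum.swap[THEN trans])

lemma mat_mult_id_right: "mat_eq_on d (mat_mult d M mat_id) M"
  unfolding mat_eq_on_def mat_mult_def mat_id_def
  by (simp add: if_distrib[where f = "\<lambda>x. _ * x"] cong: if_cong)

lemma mat_mult_id_left: "mat_eq_on d (mat_mult d mat_id M) M"
  unfolding mat_eq_on_def mat_mult_def mat_id_def
  by (simp add: if_distrib[where f = "\<lambda>x. x * _"] cong: if_cong)

lemma mat_pow_add: "mat_eq_on d (mat_pow d M (i + j)) (mat_mult d (mat_pow d M i) (mat_pow d M j))"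
proof (induction j)
  case 0
  then show ?case using mat_eq_on_sym[OF mat_mult_id_right] by simp
next
  case (Suc j)
  have "mat_eq_on d (mat_pow d M (i + Suc j)) (mat_mult d (mat_mult d (mat_pow d M i) (mat_pow d M j)) M)"
    using mat_eq_on_mult[OF Suc mat_eq_on_refl[of d M]] by simp
  then show ?case by (simp add: mat_mult_assoc)
qed

section \<open>Perturbation of matrix products\<close>

lemma op_norm_mult_perturb:
  assumes d: "0 < d"
    and PQ1: "op_norm d (mat_sub P1 Q1) \<le> p1 - q1" and Q1: "op_norm d Q1 \<le> q1"
    and PQ2: "op_norm d (mat_sub P2 Q2) \<le> p2 - q2" and Q2: "op_norm d Q2 \<le> q2"
  shows "op_norm d (mat_sub (mat_mult d P1 P2) (mat_mult d Q1 Q2)) \<le> p1 * p2 - q1 * q2"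
    and "op_norm d (mat_mult d Q1 Q2) \<le> q1 * q2"
proof -
  have nonneg: "0 \<le> op_norm d M" for M using op_norm_nonneg[OF d] .
  have "mat_add (mat_sub P2 Q2) Q2 = P2" by (auto simp: mat_add_def mat_sub_def)
  then have P2: "op_norm d P2 \<le> p2"
    using op_norm_add[OF d, of "mat_sub P2 Q2" Q2] PQ2 Q2 by simp
  have split: "mat_sub (mat_mult d P1 P2) (mat_mult d Q1 Q2) =
      mat_add (mat_mult d (mat_sub P1 Q1) P2) (mat_mult d Q1 (mat_sub P2 Q2))"
    by (auto simp: mat_add_def mat_sub_def mat_mult_def sum_subtractf[symmetric] sum.distrib[symmetric]
         algebra_simps intro!: ext sum.cong)
  have "op_norm d (mat_mult d (mat_sub P1 Q1) P2) \<le> (p1 - q1) * p2"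
    by (rule order_trans[OF op_norm_mult[OF d]], rule mult_mono) (use PQ1 P2 nonneg[of "mat_sub P1 Q1"] nonneg[of P2] in auto)
  moreover have "op_norm d (mat_mult d Q1 (mat_sub P2 Q2)) \<le> q1 * (p2 - q2)"
    by (rule order_trans[OF op_norm_mult[OF d]], rule mult_mono) (use Q1 PQ2 nonneg[of Q1] nonneg[of "mat_sub P2 Q2"] in auto)
  ultimately have "op_norm d (mat_sub (mat_mult d P1 P2) (mat_mult d Q1 Q2)) \<le> (p1 - q1) * p2 + q1 * (p2 - q2)"
    unfolding split by (intro order_trans[OF op_norm_add[OF d]]) linarith
  then show "op_norm d (mat_sub (mat_mult d P1 P2) (mat_mult d Q1 Q2)) \<le> p1 * p2 - q1 * q2"
    by (simp add: algebra_simps)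
  show "op_norm d (mat_mult d Q1 Q2) \<le> q1 * q2"
    by (rule order_trans[OF op_norm_mult[OF d]], rule mult_mono) (use Q1 Q2 nonneg[of Q1] nonneg[of Q2] in auto)
qed

lemma op_norm_pow_perturb:
  assumes d: "0 < d" and PQ: "op_norm d (mat_sub P Q) \<le> p - q" and Q: "op_norm d Q \<le> q"
  shows "op_norm d (mat_sub (mat_pow d P k) (mat_pow d Q k)) \<le> p ^ k - q ^ k
       \<and> op_norm d (mat_pow d Q k) \<le> q ^ k"
proof (induction k)
  case 0
  have "mat_sub mat_id mat_id = (\<lambda>i j. 0)" by (auto simp: mat_sub_def)
  then show ?case using op_norm_zero_le[OF d] op_norm_id_le[OF d] by simp
next
  case (Suc k)
  then show ?case
    using op_norm_mult_perturb[OF d _ _ PQ Q, of "mat_pow d P k" "mat_pow d Q k" "p ^ k" "q ^ k"]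
    by (simp add: mult.commute)
qed

lemma mat_eq_on_step_diff:
  "mat_eq_on d (mat_sub (mat_sub mat_id (mat_mult d S A)) (mat_sub mat_id A))
               (mat_neg (mat_mult d (mat_sub S mat_id) A))"
proof -
  have "mat_mult d mat_id A p q = A p q" if "p < d" "q < d" for p q
    using mat_mult_id_left[of d A] that by (simp add: mat_eq_on_def)
  then show ?thesis
    unfolding mat_eq_on_def mat_sub_def mat_neg_def
    by (auto simp: mat_mult_def sum_subtractf left_diff_distrib)
qed

lemma op_norm_perturbed_product_le:
  fixes S A :: "nat \<Rightarrow> nat \<Rightarrow> real"
  assumes d: "0 < d" and ij: "i + j = m"
  defines "R \<equiv> mat_sub mat_id (mat_mult d S A)" and "B \<equiv> mat_sub mat_id A"
    and "e \<equiv> op_norm d (mat_sub mat_id A)" and "X \<equiv> op_norm d (mat_sub S mat_id)"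
  shows "op_norm d (mat_sub (mat_mult d (mat_mult d (mat_pow d R i) S) (mat_pow d R j)) (mat_pow d B m))
     \<le> (e + X * op_norm d A) ^ m * (1 + X) - e ^ m"
proof -
  define r where "r = e + X * op_norm d A"
  have RB: "op_norm d (mat_sub R B) \<le> r - e"
  proof -
    have "op_norm d (mat_sub R B) = op_norm d (mat_neg (mat_mult d (mat_sub S mat_id) A))"
      unfolding R_def B_def by (rule op_norm_cong[OF mat_eq_on_step_diff])
    also have "\<dots> \<le> op_norm d (mat_mult d (mat_sub S mat_id) A)" by (rule op_norm_neg[OF d])
    also have "\<dots> \<le> X * op_norm d A" unfolding X_def by (rule op_norm_mult[OF d])
    finally show ?thesis by (simp add: r_def)
  qed
  have B: "op_norm d B \<le> e" by (simp add: e_def B_def)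
  note Ri = op_norm_pow_perturb[OF d RB B, of i] and Rj = op_norm_pow_perturb[OF d RB B, of j]
  have "op_norm d (mat_sub S mat_id) \<le> (1 + X) - 1" by (simp add: X_def)
  then have "op_norm d (mat_sub (mat_mult d (mat_pow d R i) S) (mat_mult d (mat_pow d B i) mat_id))
      \<le> r ^ i * (1 + X) - e ^ i * 1"
    and "op_norm d (mat_mult d (mat_pow d B i) mat_id) \<le> e ^ i * 1"
    using op_norm_mult_perturb[OF d] Ri op_norm_id_le[OF d] by blast+
  then have "op_norm d (mat_sub (mat_mult d (mat_mult d (mat_pow d R i) S) (mat_pow d R j))
              (mat_mult d (mat_mult d (mat_pow d B i) mat_id) (mat_pow d B j)))
       \<le> r ^ i * (1 + X) * r ^ j - e ^ i * 1 * e ^ j"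
    using op_norm_mult_perturb(1)[OF d _ _ Rj[THEN conjunct1] Rj[THEN conjunct2]] by blast
  moreover have "mat_eq_on d (mat_mult d (mat_mult d (mat_pow d B i) mat_id) (mat_pow d B j)) (mat_pow d B m)"
    using mat_eq_on_trans[OF mat_eq_on_mult[OF mat_mult_id_right mat_eq_on_refl]
        mat_eq_on_sym[OF mat_pow_add[of d B i j]]] ij by blast
  ultimately show ?thesis
    unfolding r_def[symmetric] ij[symmetric] power_add
    using op_norm_cong[OF mat_eq_on_sub[OF mat_eq_on_refl]] by (simp add: ac_simps)
qed

lemma perturbed_power_le_exp:
  fixes e a X :: real
  assumes e: "0 < e" and a: "0 \<le> a" and X: "0 \<le> X"
  shows "(e + X * a) ^ m * (1 + X) \<le> e ^ m * exp ((real m * a / e + 1) * X)"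
proof -
  have "e + X * a = e * (1 + (a / e) * X)" using e by (simp add: field_simps)
  also have "\<dots> \<le> e * exp ((a / e) * X)" using e by (intro mult_left_mono exp_ge_add_one_self) auto
  finally have "(e + X * a) ^ m \<le> (e * exp ((a / e) * X)) ^ m"
    using e a X by (intro power_mono) auto
  also have "\<dots> = e ^ m * exp (real m * (a / e) * X)"
    by (simp add: power_mult_distrib exp_of_nat_mult[symmetric] mult.assoc)
  finally have "(e + X * a) ^ m * (1 + X) \<le> e ^ m * exp (real m * (a / e) * X) * exp X"
    using exp_ge_add_one_self[of X] X e a by (intro mult_mono) auto
  also have "\<dots> = e ^ m * exp ((real m * a / e + 1) * X)"
    by (simp add: mult_exp_exp algebra_simps)
  finally show ?thesis .
qed


section \<open>Operator norms from quadratic forms on a net\<close>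

lemma bilin_sym: "sym_mat d M \<Longrightarrow> bilin d w M v = bilin d v M w"
  unfolding bilin_expand sym_mat_def
  by (subst sum.swap) (auto intro!: sum.cong simp: algebra_simps)

lemma bilin_diff_left: "bilin d (\<lambda>i. a i - b i) M v = bilin d a M v - bilin d b M v"
  unfolding bilin_expand by (simp add: algebra_simps sum_subtractf)

lemma bilin_diff_right: "bilin d w M (\<lambda>i. a i - b i) = bilin d w M a - bilin d w M b"
  unfolding bilin_expand by (simp add: algebra_simps sum_subtractf)

lemma bilin_add_left: "bilin d (\<lambda>i. a i + b i) M v = bilin d a M v + bilin d b M v"
  unfolding bilin_expand by (simp add: algebra_simps sum.distrib)

lemma bilin_add_right: "bilin d w M (\<lambda>i. a i + b i) = bilin d w M a + bilin d w M b"
  unfolding bilin_expand by (simp add: algebra_simps sum.distrib)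

lemma bilin_scale: "bilin d (\<lambda>i. c * a i) M (\<lambda>i. c * a i) = c\<^sup>2 * bilin d a M a"
  unfolding bilin_expand by (simp add: sum_distrib_left power2_eq_square algebra_simps)

lemma op_norm_le_bilin:
  assumes d: "0 < d" and K: "0 \<le> K"
    and bound: "\<And>v w. vec_norm d v = 1 \<Longrightarrow> vec_norm d w = 1 \<Longrightarrow> \<bar>bilin d w M v\<bar> \<le> K"
  shows "op_norm d M \<le> K"
proof (rule op_norm_le[OF d])
  fix v assume v: "vec_norm d v = 1"
  define t where "t = vec_norm d (mat_vec d M v)"
  show "vec_norm d (mat_vec d M v) \<le> K"
  proof (cases "t = 0")
    case True
    then show ?thesis using K by (simp add: t_def)
  next
    case False
    define w where "w = (\<lambda>i. (1 / t) * mat_vec d M v i)"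
    have "bilin d w M v = (1 / t) * t\<^sup>2"
      unfolding bilin_def w_def t_def vec_norm_sq
      by (simp add: power2_eq_square sum_divide_distrib[symmetric])
    also have "\<dots> = t" by (simp add: power2_eq_square)
    finally have "bilin d w M v = t" .
    moreover have "vec_norm d w = 1" unfolding w_def t_def using False[unfolded t_def] by (rule normalize_vec)
    ultimately have "\<bar>t\<bar> \<le> K" using bound[OF v] by metis
    then show ?thesis by (simp add: t_def)
  qed
qed

lemma sym_op_norm_le:
  assumes d: "0 < d" and M: "sym_mat d M" and K: "0 \<le> K"
    and bound: "\<And>x. vec_norm d x = 1 \<Longrightarrow> \<bar>bilin d x M x\<bar> \<le> K"
  shows "op_norm d M \<le> K"
proof -
  have quad: "\<bar>bilin d x M x\<bar> \<le> K * (vec_norm d x)\<^sup>2" for x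
  proof (cases "vec_norm d x = 0")
    case True
    then show ?thesis using K by (simp add: vec_norm_eq_0_iff bilin_expand)
  next
    case False
    define t where "t = vec_norm d x"
    define v where "v = (\<lambda>i. (1 / t) * x i)"
    have "x = (\<lambda>i. t * v i)" using False by (auto simp: v_def t_def)
    then have "\<bar>bilin d x M x\<bar> = t\<^sup>2 * \<bar>bilin d v M v\<bar>" by (metis bilin_scale abs_mult abs_power2)
    also have "\<dots> \<le> t\<^sup>2 * K"
      using bound[OF normalize_vec[OF False]] by (simp add: v_def t_def mult_left_mono)
    finally show ?thesis by (simp add: t_def mult.commute)
  qed
  show ?thesis
  proof (rule op_norm_le_bilin[OF d K])
    fix v w assume v: "vec_norm d v = 1" and w: "vec_norm d w = 1"
    define p where "p = bilin d (\<lambda>i. w i + v i) M (\<lambda>i. w i + v i)"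
    define q where "q = bilin d (\<lambda>i. w i - v i) M (\<lambda>i. w i - v i)"
    have pol: "4 * bilin d w M v = p - q"
      unfolding p_def q_def bilin_add_left bilin_add_right bilin_diff_left bilin_diff_right
      using bilin_sym[OF M, of v w] by simp
    have "(vec_norm d (\<lambda>i. w i + v i))\<^sup>2 + (vec_norm d (\<lambda>i. w i - v i))\<^sup>2
        = 2 * (vec_norm d w)\<^sup>2 + 2 * (vec_norm d v)\<^sup>2"
      unfolding vec_norm_sq by (simp add: sum.distrib[symmetric] sum_distrib_left power2_eq_square algebra_simps)
    then have par: "K * (vec_norm d (\<lambda>i. w i + v i))\<^sup>2 + K * (vec_norm d (\<lambda>i. w i - v i))\<^sup>2 = 4 * K"
      using v w by (simp add: distrib_left[symmetric])
    have "\<bar>p\<bar> + \<bar>q\<bar> \<le> 4 * K"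
      using quad[of "\<lambda>i. w i + v i"] quad[of "\<lambda>i. w i - v i"] par unfolding p_def q_def by linarith
    then have "\<bar>4 * bilin d w M v\<bar> \<le> 4 * K" using pol abs_triangle_ineq4[of p q] by linarith
    then show "\<bar>bilin d w M v\<bar> \<le> K" by (simp add: abs_mult)
  qed
qed

lemma op_norm_le_net:
  assumes d: "0 < d" and M: "sym_mat d M" and Q: "0 \<le> Q"
    and net: "\<And>v. vec_norm d v = 1 \<Longrightarrow> \<exists>z\<in>N. vec_norm d (\<lambda>i. v i - z i) \<le> 1/8 \<and> vec_norm d z \<le> 9/8"
    and bound: "\<And>z. z \<in> N \<Longrightarrow> \<bar>bilin d z M z\<bar> \<le> Q"
  shows "op_norm d M \<le> 2 * Q"
proof -
  have M0: "0 \<le> op_norm d M" by (rule op_norm_nonneg[OF d])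
  have "op_norm d M \<le> Q + (17/64) * op_norm d M"
  proof (rule sym_op_norm_le[OF d M])
    fix v assume v: "vec_norm d v = 1"
    obtain z where z: "z \<in> N" "vec_norm d (\<lambda>i. v i - z i) \<le> 1/8" "vec_norm d z \<le> 9/8"
      using net[OF v] by blast
    have "bilin d v M v = bilin d z M z + bilin d (\<lambda>i. v i - z i) M v + bilin d z M (\<lambda>i. v i - z i)"
      unfolding bilin_diff_left bilin_diff_right by simp
    moreover have "\<bar>bilin d (\<lambda>i. v i - z i) M v\<bar> \<le> (1/8) * op_norm d M * 1"
      by (rule order_trans[OF abs_bilin_le]) (use z v M0 in \<open>intro mult_mono, auto\<close>)
    moreover have "\<bar>bilin d z M (\<lambda>i. v i - z i)\<bar> \<le> (9/8) * op_norm d M * (1/8)"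
      by (rule order_trans[OF abs_bilin_le]) (use z M0 in \<open>intro mult_mono, auto\<close>)
    ultimately show "\<bar>bilin d v M v\<bar> \<le> Q + (17/64) * op_norm d M"
      using bound[OF z(1)] by linarith
  qed (use Q M0 in simp)
  then show ?thesis using Q by linarith
qed

text \<open>Rounding a unit vector down to the grid of step \<open>1/(8 sqrt d)\<close> moves it by at most \<open>1/8\<close>, and the
  integer coordinates of the result have \<open>\<ell>\<^sub>1\<close>-norm at most \<open>9d\<close>; weighting by \<open>exp (9d - \<parallel>m\<parallel>\<^sub>1)\<close>
  shows there are at most \<open>exp (9d) 3\<^sup>d\<close> such integer vectors.\<close>

definition grid_step :: "nat \<Rightarrow> real" where
  "grid_step d = 1 / (8 * sqrt (real d))"

definition grid_coeffs :: "nat \<Rightarrow> (nat \<Rightarrow> int) set" where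
  "grid_coeffs d = {m \<in> PiE {..<d} (\<lambda>_. {-(9 * int d)..9 * int d}). (\<Sum>j<d. \<bar>m j\<bar>) \<le> 9 * int d}"

definition net :: "nat \<Rightarrow> (nat \<Rightarrow> real) set" where
  "net d = {z \<in> (\<lambda>m j. grid_step d * of_int (m j)) ` grid_coeffs d. vec_norm d z \<le> 9/8}"

lemma finite_grid_coeffs: "finite (grid_coeffs d)"
  unfolding grid_coeffs_def by (auto intro!: finite_PiE)

lemma finite_net: "finite (net d)"
  unfolding net_def using finite_grid_coeffs by simp

lemma sum_exp_neg_abs_le: "(\<Sum>t\<in>{-int R..int R}. exp (- real_of_int \<bar>t\<bar>)) \<le> 3 - 2 * (1/2) ^ R"
proof (induction R)
  case 0
  then show ?case by simp
next
  case (Suc R)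
  have "{-int (Suc R)..int (Suc R)} = insert (-int (Suc R)) (insert (int (Suc R)) {-int R..int R})"
    by auto
  then have "(\<Sum>t\<in>{-int (Suc R)..int (Suc R)}. exp (- real_of_int \<bar>t\<bar>))
       = 2 * exp (- real (Suc R)) + (\<Sum>t\<in>{-int R..int R}. exp (- real_of_int \<bar>t\<bar>))"
    by simp
  also have "exp (- real (Suc R)) = exp (-1) ^ Suc R"
    by (subst exp_of_nat_mult[symmetric]) simp
  also have "\<dots> \<le> (1/2) ^ Suc R"
    using exp_ge_add_one_self[of 1] by (intro power_mono) (simp_all add: exp_minus field_simps)
  finally show ?case using Suc by simp
qed

lemma sum_box_exp_neg_abs_le:
  "(\<Sum>m\<in>PiE {..<d} (\<lambda>_. {-int R..int R}). \<Prod>j<d. exp (- real_of_int \<bar>m j\<bar>)) \<le> 3 ^ d"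
proof -
  have "(\<Sum>m\<in>PiE {..<d} (\<lambda>_. {-int R..int R}). \<Prod>j<d. exp (- real_of_int \<bar>m j\<bar>))
      = (\<Prod>j<d. \<Sum>t\<in>{-int R..int R}. exp (- real_of_int \<bar>t\<bar>))"
    by (subst prod_sum_PiE) auto
  also have "\<dots> \<le> (\<Prod>j<d. (3::real))"
  proof (rule prod_mono)
    have "0 \<le> (1/2::real) ^ R" by simp
    moreover have "0 \<le> (\<Sum>t\<in>{-int R..int R}. exp (- real_of_int \<bar>t\<bar>))" by (rule sum_nonneg) simp
    ultimately show "0 \<le> (\<Sum>t\<in>{-int R..int R}. exp (- real_of_int \<bar>t\<bar>))
        \<and> (\<Sum>t\<in>{-int R..int R}. exp (- real_of_int \<bar>t\<bar>)) \<le> 3"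
      using sum_exp_neg_abs_le[of R] by linarith
  qed
  finally show ?thesis by simp
qed

lemma card_grid_coeffs_le: "real (card (grid_coeffs d)) \<le> exp (11 * real d)"
proof -
  define R where "R = 9 * d"
  define B where "B = PiE {..<d} (\<lambda>_::nat. {-int R..int R})"
  define w where "w = (\<lambda>m. exp (real R - (\<Sum>j<d. real_of_int \<bar>m j\<bar>)))"
  have grid: "grid_coeffs d = {m \<in> B. (\<Sum>j<d. \<bar>m j\<bar>) \<le> int R}" unfolding grid_coeffs_def B_def R_def by simp
  have "real (card (grid_coeffs d)) = (\<Sum>m\<in>grid_coeffs d. 1)" by simp
  also have "\<dots> \<le> (\<Sum>m\<in>grid_coeffs d. w m)"
  proof (rule sum_mono)
    fix m assume "m \<in> grid_coeffs d"
    then have "(\<Sum>j<d. \<bar>m j\<bar>) \<le> int R" by (simp add: grid)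
    then have "(\<Sum>j<d. real_of_int \<bar>m j\<bar>) \<le> real R"
      by (metis of_int_le_iff of_int_of_nat_eq of_int_sum)
    then show "1 \<le> w m" by (simp add: w_def)
  qed
  also have "\<dots> \<le> (\<Sum>m\<in>B. w m)"
    by (rule sum_mono2) (auto simp: grid B_def w_def intro!: finite_PiE)
  also have "\<dots> = exp (real R) * (\<Sum>m\<in>B. \<Prod>j<d. exp (- real_of_int \<bar>m j\<bar>))"
  proof -
    have "w m = exp (real R) * (\<Prod>j<d. exp (- real_of_int \<bar>m j\<bar>))" for m
    proof -
      have "real R - (\<Sum>j<d. real_of_int \<bar>m j\<bar>) = real R + (\<Sum>j<d. - real_of_int \<bar>m j\<bar>)"
        by (simp add: sum_negf)
      then show ?thesis unfolding w_def by (simp only: exp_add exp_sum[OF finite_lessThan])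
    qed
    then show ?thesis by (simp add: sum_distrib_left)
  qed
  also have "\<dots> \<le> exp (real R) * exp 2 ^ d"
  proof -
    have "(2::real) \<le> exp 1" using exp_ge_add_one_self[of 1] by simp
    then have "(3::real) \<le> exp 1 * exp 1" using mult_mono[of 2 "exp 1" 2 "exp (1::real)"] by simp
    then have "(3::real) ^ d \<le> exp 2 ^ d" by (simp add: power_mono mult_exp_exp)
    then show ?thesis using sum_box_exp_neg_abs_le[of d R] unfolding B_def by simp
  qed
  also have "\<dots> = exp (11 * real d)" unfolding R_def by (simp add: exp_of_nat_mult[symmetric] exp_add[symmetric])
  finally show ?thesis .
qed

lemma card_net_le: "real (card (net d)) \<le> exp (11 * real d)"
proof -
  have "card (net d) \<le> card (grid_coeffs d)"
    unfolding net_def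
    by (rule order_trans[OF card_mono card_image_le]) (auto intro: finite_grid_coeffs)
  then show ?thesis using card_grid_coeffs_le[of d] by linarith
qed

lemma net_sum_sq_le: "z \<in> net d \<Longrightarrow> (\<Sum>j<d. (z j)\<^sup>2) \<le> 2"
proof -
  assume "z \<in> net d"
  then have "(vec_norm d z)\<^sup>2 \<le> (9/8)\<^sup>2" unfolding net_def by (intro power_mono) auto
  then show ?thesis unfolding vec_norm_sq by (simp add: power2_eq_square)
qed


lemma floor_div_bounds:
  fixes x h :: real
  assumes h: "0 < h"
  shows "0 \<le> x - h * \<lfloor>x / h\<rfloor>" and "x - h * \<lfloor>x / h\<rfloor> < h"
    and "\<bar>real_of_int \<lfloor>x / h\<rfloor>\<bar> \<le> \<bar>x\<bar> / h + 1"
proof -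
  have "real_of_int \<lfloor>x / h\<rfloor> \<le> x / h" "x / h < real_of_int \<lfloor>x / h\<rfloor> + 1" by linarith+
  then have "real_of_int \<lfloor>x / h\<rfloor> * h \<le> x" "x < (real_of_int \<lfloor>x / h\<rfloor> + 1) * h"
    by (metis h pos_le_divide_eq, metis h pos_divide_less_eq)
  then show "0 \<le> x - h * \<lfloor>x / h\<rfloor>" "x - h * \<lfloor>x / h\<rfloor> < h"
    by (simp_all add: algebra_simps)
  have "\<bar>real_of_int \<lfloor>x / h\<rfloor>\<bar> \<le> \<bar>x / h\<bar> + 1" by linarith
  then show "\<bar>real_of_int \<lfloor>x / h\<rfloor>\<bar> \<le> \<bar>x\<bar> / h + 1" using h by simp
qed

lemma net_approx:
  assumes d: "0 < d" and v: "vec_norm d v = 1"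
  shows "\<exists>z\<in>net d. vec_norm d (\<lambda>i. v i - z i) \<le> 1/8 \<and> vec_norm d z \<le> 9/8"
proof -
  define h where "h = grid_step d"
  have h: "0 < h" unfolding h_def grid_step_def using d by simp
  have hd: "sqrt (real d) / h = 8 * real d" and hsq: "real d * h\<^sup>2 = 1/64"
    unfolding h_def grid_step_def using d by (simp_all add: power_divide)
  define m where "m = restrict (\<lambda>j. \<lfloor>v j / h\<rfloor>) {..<d}"
  define z where "z = (\<lambda>j. h * real_of_int (m j))"
  have "(vec_norm d (\<lambda>i. v i - z i))\<^sup>2 \<le> (\<Sum>j<d. h\<^sup>2)"
    unfolding vec_norm_sq z_def m_def using floor_div_bounds(1,2)[OF h]
    by (intro sum_mono power_mono) (auto simp: less_imp_le)
  also have "\<dots> = (1/8)\<^sup>2" using hsq by (simp add: power2_eq_square)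
  finally have close: "vec_norm d (\<lambda>i. v i - z i) \<le> 1/8"
    by (rule power2_le_imp_le) simp
  have "vec_norm d z = L2_set (\<lambda>i. v i + (- (v i - z i))) {..<d}" by (simp add: vec_norm_def)
  also have "\<dots> \<le> vec_norm d v + vec_norm d (\<lambda>i. - (v i - z i))"
    unfolding vec_norm_def by (rule L2_set_triangle_ineq)
  finally have short: "vec_norm d z \<le> 9/8" using close v vec_norm_uminus[of d "\<lambda>i. v i - z i"] by simp
  have "(\<Sum>j<d. \<bar>v j\<bar> * \<bar>1\<bar>) \<le> vec_norm d v * L2_set (\<lambda>_. 1::real) {..<d}"
    unfolding vec_norm_def by (rule L2_set_mult_ineq)
  then have l1: "(\<Sum>j<d. \<bar>v j\<bar>) \<le> sqrt (real d)" using v by (simp add: L2_set_constant)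
  have "real_of_int (\<Sum>j<d. \<bar>m j\<bar>) \<le> (\<Sum>j<d. \<bar>v j\<bar> / h + 1)"
    unfolding m_def using floor_div_bounds(3)[OF h] by (auto intro!: sum_mono)
  also have "\<dots> = (\<Sum>j<d. \<bar>v j\<bar>) / h + real d" by (simp add: sum.distrib sum_divide_distrib)
  also have "\<dots> \<le> 9 * real d" using divide_right_mono[OF l1, of h] h hd by simp
  finally have m_l1: "(\<Sum>j<d. \<bar>m j\<bar>) \<le> 9 * int d" by linarith
  have "m j \<in> {-(9 * int d)..9 * int d}" if "j < d" for j
    using member_le_sum[of j "{..<d}" "\<lambda>j. \<bar>m j\<bar>"] that m_l1 by (simp add: abs_le_iff)
  then have "m \<in> grid_coeffs d"
    unfolding grid_coeffs_def using m_l1 by (auto simp: m_def)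
  then have "z \<in> net d" unfolding net_def z_def h_def using short[unfolded z_def h_def] by auto
  then show ?thesis using close short by blast
qed

lemma net_nonempty: "0 < d \<Longrightarrow> net d \<noteq> {}"
  using net_approx[OF _ vec_norm_unit_vec] by blast


section \<open>Gaussian samples\<close>

abbreviation std_normal :: "real measure" where
  "std_normal \<equiv> density lborel std_normal_density"

lemma prob_space_gauss_samples: "prob_space (gauss_samples n d)"
  unfolding gauss_samples_def by (intro prob_space_PiM prob_space_normal_density) simp

lemma space_gauss_samples: "space (gauss_samples n d) = PiE ({..<n} \<times> {..<d}) (\<lambda>_. UNIV)"
  unfolding gauss_samples_def by (simp add: space_PiM)

lemma gauss_samples_coord_measurable:
  assumes i: "i \<in> {..<n} \<times> {..<d}"
  shows "(\<lambda>\<omega>. \<omega> i) \<in> borel_measurable (gauss_samples n d)"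
proof -
  have "(\<lambda>\<omega>. \<omega> i) \<in> measurable (gauss_samples n d) std_normal"
    unfolding gauss_samples_def by (rule measurable_component_singleton[OF i])
  moreover have "measurable (gauss_samples n d) std_normal = measurable (gauss_samples n d) borel"
    by (rule measurable_cong_sets) simp_all
  ultimately show ?thesis by simp
qed

lemma distr_gauss_samples_coord:
  assumes i: "i \<in> {..<n} \<times> {..<d}"
  shows "distr (gauss_samples n d) borel (\<lambda>\<omega>. \<omega> i) = std_normal"
proof -
  have "distr (gauss_samples n d) borel (\<lambda>\<omega>. \<omega> i) = distr (gauss_samples n d) std_normal (\<lambda>\<omega>. \<omega> i)"
    by (rule distr_cong) auto
  also have "\<dots> = std_normal" unfolding gauss_samples_def
    by (rule distr_PiM_component) (auto intro: prob_space_normal_density i)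
  finally show ?thesis .
qed

lemma gauss_samples_coord_distributed:
  assumes i: "i \<in> {..<n} \<times> {..<d}"
  shows "distributed (gauss_samples n d) lborel (\<lambda>\<omega>. \<omega> i) (\<lambda>x. ennreal (normal_density 0 1 x))"
proof -
  have "distr (gauss_samples n d) lborel (\<lambda>\<omega>. \<omega> i) = distr (gauss_samples n d) borel (\<lambda>\<omega>. \<omega> i)"
    by (rule distr_cong) auto
  moreover have "measurable (gauss_samples n d) lborel = measurable (gauss_samples n d) borel"
    by (rule measurable_cong_sets) simp_all
  ultimately show ?thesis
    unfolding distributed_def using distr_gauss_samples_coord[OF i] gauss_samples_coord_measurable[OF i]
    by simp
qed

lemma gauss_samples_coords_indep:
  assumes "0 < n" "0 < d"
  shows "prob_space.indep_vars (gauss_samples n d) (\<lambda>_. borel) (\<lambda>i \<omega>. \<omega> i) ({..<n} \<times> {..<d})"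
proof -
  interpret prob_space "gauss_samples n d" by (rule prob_space_gauss_samples)
  let ?I = "{..<n} \<times> {..<d}"
  have "distr (gauss_samples n d) (\<Pi>\<^sub>M i\<in>?I. borel) (\<lambda>x. \<lambda>i\<in>?I. x i)
      = distr (gauss_samples n d) (gauss_samples n d) (\<lambda>x. x)"
  proof (rule distr_cong)
    show "sets (\<Pi>\<^sub>M i\<in>?I. borel) = sets (gauss_samples n d)"
      unfolding gauss_samples_def by (rule sets_PiM_cong) auto
    fix x assume "x \<in> space (gauss_samples n d)"
    then show "(\<lambda>i\<in>?I. x i) = x" unfolding space_gauss_samples by (auto simp: PiE_def extensional_def)
  qed simp
  also have "\<dots> = (\<Pi>\<^sub>M i\<in>?I. distr (gauss_samples n d) borel (\<lambda>\<omega>. \<omega> i))"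
    unfolding gauss_samples_def
    by (simp, rule PiM_cong) (simp_all add: distr_gauss_samples_coord[unfolded gauss_samples_def])
  finally show ?thesis
    using assms gauss_samples_coord_measurable
    by (subst indep_vars_iff_distr_eq_PiM') auto
qed

lemma normal_density_mult_exp_sq:
  assumes s: "0 < \<sigma>" and c: "0 < 1 - 2 * b * \<sigma>\<^sup>2"
  shows "normal_density 0 \<sigma> x * exp (b * x\<^sup>2)
       = (1 / sqrt (1 - 2 * b * \<sigma>\<^sup>2)) * normal_density 0 (\<sigma> / sqrt (1 - 2 * b * \<sigma>\<^sup>2)) x"
proof -
  define c where "c = 1 - 2 * b * \<sigma>\<^sup>2"
  have c0: "0 < c" using c by (simp add: c_def)
  have sc: "0 < sqrt c" using c0 by simp
  have tau2: "(\<sigma> / sqrt c)\<^sup>2 = \<sigma>\<^sup>2 / c" using c0 by (simp add: power_divide)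
  have sq: "sqrt (2 * pi * (\<sigma>\<^sup>2 / c)) = sqrt (2 * pi * \<sigma>\<^sup>2) / sqrt c"
    by (simp add: real_sqrt_divide[symmetric])
  have ex: "- x\<^sup>2 / (2 * (\<sigma>\<^sup>2 / c)) = - x\<^sup>2 / (2 * \<sigma>\<^sup>2) + b * x\<^sup>2"
    using s c0 unfolding c_def by (simp add: field_simps)
  have "normal_density 0 \<sigma> x * exp (b * x\<^sup>2) = 1 / sqrt (2 * pi * \<sigma>\<^sup>2) * exp (- x\<^sup>2 / (2 * \<sigma>\<^sup>2) + b * x\<^sup>2)"
    unfolding normal_density_def by (simp add: mult_exp_exp algebra_simps)
  also have "\<dots> = (1 / sqrt c) * (1 / sqrt (2 * pi * (\<sigma>\<^sup>2 / c)) * exp (- x\<^sup>2 / (2 * (\<sigma>\<^sup>2 / c))))"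
    unfolding sq ex using sc by simp
  also have "\<dots> = (1 / sqrt c) * normal_density 0 (\<sigma> / sqrt c) x"
    unfolding normal_density_def tau2 by simp
  finally show ?thesis unfolding c_def .
qed

lemma has_bochner_integral_normal_exp_sq:
  assumes s: "0 < \<sigma>" and c: "0 < 1 - 2 * b * \<sigma>\<^sup>2"
  shows "has_bochner_integral lborel (\<lambda>x. normal_density 0 \<sigma> x * exp (b * x\<^sup>2)) (1 / sqrt (1 - 2 * b * \<sigma>\<^sup>2))"
proof -
  have "0 < \<sigma> / sqrt (1 - 2 * b * \<sigma>\<^sup>2)" using s c by simp
  then have "has_bochner_integral lborel (normal_density 0 (\<sigma> / sqrt (1 - 2 * b * \<sigma>\<^sup>2))) 1"
    using has_bochner_integral_integrable[OF integrable_normal_density] by simp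
  then show ?thesis
    unfolding normal_density_mult_exp_sq[OF s c] using has_bochner_integral_mult_right by fastforce
qed

lemma centred_chi_square_mgf_le:
  fixes t :: real
  assumes t: "\<bar>t\<bar> \<le> 1/4"
  shows "exp (- t) / sqrt (1 - 2 * t) \<le> exp (4 * t\<^sup>2)"
proof -
  have "- 2 * t - 8 * t\<^sup>2 \<le> ln (1 - 2 * t)"
  proof (cases "0 \<le> t")
    case True
    have "- (2 * t) - 2 * (2 * t)\<^sup>2 \<le> ln (1 - 2 * t)"
      by (rule ln_one_minus_pos_lower_bound) (use True t in auto)
    then show ?thesis by (simp add: power2_eq_square)
  next
    case False
    have "(- 2 * t) - (- 2 * t)\<^sup>2 \<le> ln (1 + (- 2 * t))"
      by (rule ln_one_plus_pos_lower_bound) (use False t in auto)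
    then have "- (2 * t) - 4 * (t * t) \<le> ln (1 - 2 * t)" by (simp add: power2_eq_square)
    moreover have "0 \<le> t * t" by simp
    ultimately show ?thesis unfolding power2_eq_square by linarith
  qed
  moreover have c0: "0 < 1 - 2 * t" using t by auto
  ultimately have "exp (- 2 * t - 8 * t\<^sup>2) \<le> 1 - 2 * t"
    by (metis exp_le_cancel_iff exp_ln)
  then have "(exp (- t - 4 * t\<^sup>2))\<^sup>2 \<le> 1 - 2 * t"
    by (simp add: power2_eq_square exp_add[symmetric])
  then have "exp (- t - 4 * t\<^sup>2) \<le> sqrt (1 - 2 * t)" using real_le_rsqrt by blast
  then have "exp (- t) / sqrt (1 - 2 * t) \<le> exp (- t) / exp (- t - 4 * t\<^sup>2)"
    by (rule divide_left_mono) (use c0 in auto)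
  also have "\<dots> = exp (4 * t\<^sup>2)" by (simp add: exp_diff[symmetric])
  finally show ?thesis .
qed


definition quad_dev :: "nat \<Rightarrow> nat \<Rightarrow> (nat \<Rightarrow> real) \<Rightarrow> (nat \<times> nat \<Rightarrow> real) \<Rightarrow> real" where
  "quad_dev n d z \<omega> = (1 / real n) * (\<Sum>s<n. (\<Sum>j<d. z j * \<omega> (s, j))\<^sup>2 - (\<Sum>j<d. (z j)\<^sup>2))"

lemma bilin_emp_cov_sub_id:
  assumes n: "0 < n"
  shows "bilin d z (mat_sub (emp_cov n d \<omega>) mat_id) z = quad_dev n d z \<omega>"
proof -
  have "bilin d z (mat_sub (emp_cov n d \<omega>) mat_id) z = bilin d z (emp_cov n d \<omega>) z - bilin d z mat_id z"
    unfolding bilin_expand mat_sub_def by (simp add: algebra_simps sum_subtractf)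
  moreover have "bilin d z mat_id z = (\<Sum>j<d. (z j)\<^sup>2)"
    unfolding bilin_expand mat_id_def
    by (simp add: if_distrib[where f = "\<lambda>x. _ * x * _"] power2_eq_square cong: if_cong)
  moreover have "bilin d z (emp_cov n d \<omega>) z = (1 / real n) * (\<Sum>s<n. (\<Sum>j<d. z j * \<omega> (s, j))\<^sup>2)"
  proof -
    have "bilin d z (emp_cov n d \<omega>) z
        = (\<Sum>i<d. \<Sum>j<d. \<Sum>s<n. (1 / real n) * ((z i * \<omega> (s, i)) * (z j * \<omega> (s, j))))"
      unfolding bilin_expand emp_cov_def by (simp add: sum_distrib_left sum_distrib_right ac_simps)
    also have "\<dots> = (\<Sum>s<n. \<Sum>i<d. \<Sum>j<d. (1 / real n) * ((z i * \<omega> (s, i)) * (z j * \<omega> (s, j))))"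
      by (subst sum.swap, rule sum.cong[OF refl], subst sum.swap) simp
    also have "\<dots> = (\<Sum>s<n. (1 / real n) * ((\<Sum>i<d. z i * \<omega> (s, i)) * (\<Sum>j<d. z j * \<omega> (s, j))))"
      unfolding sum_product by (simp only: sum_distrib_left)
    also have "\<dots> = (1 / real n) * (\<Sum>s<n. (\<Sum>j<d. z j * \<omega> (s, j))\<^sup>2)"
      by (simp only: sum_distrib_left power2_eq_square)
    finally show ?thesis .
  qed
  moreover have "quad_dev n d z \<omega> = (1 / real n) * (\<Sum>s<n. (\<Sum>j<d. z j * \<omega> (s, j))\<^sup>2) - (\<Sum>j<d. (z j)\<^sup>2)"
    unfolding quad_dev_def using n by (simp add: sum_subtractf right_diff_distrib)
  ultimately show ?thesis by simp
qed

lemma sample_linear_comb_distributed: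
  assumes n: "0 < n" and d: "0 < d" and s: "s < n" and r: "0 < (\<Sum>j<d. (z j)\<^sup>2)"
  shows "distributed (gauss_samples n d) lborel (\<lambda>\<omega>. \<Sum>j<d. z j * \<omega> (s, j))
           (\<lambda>x. ennreal (normal_density 0 (sqrt (\<Sum>j<d. (z j)\<^sup>2)) x))"
proof -
  interpret prob_space "gauss_samples n d" by (rule prob_space_gauss_samples)
  define J where "J = {j \<in> {..<d}. z j \<noteq> 0}"
  have J: "finite J" "J \<noteq> {}" using r unfolding J_def by (auto intro: ccontr)
  have "indep_vars (\<lambda>j. PiM {(s, j)} (\<lambda>_. borel)) (\<lambda>j \<omega>. restrict (\<lambda>i. \<omega> i) {(s, j)}) J"
    by (rule indep_vars_restrict[OF gauss_samples_coords_indep[OF n d]])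
       (auto simp: J_def s disjoint_family_on_def)
  then have "indep_vars (\<lambda>_. borel) (\<lambda>j \<omega>. (\<lambda>f. z j * f (s, j)) (restrict (\<lambda>i. \<omega> i) {(s, j)})) J"
    by (rule indep_vars_compose2) measurable
  then have indep: "indep_vars (\<lambda>_. borel) (\<lambda>j \<omega>. z j * \<omega> (s, j)) J"
    by simp
  have "distributed (gauss_samples n d) lborel (\<lambda>\<omega>. z j * \<omega> (s, j)) (\<lambda>x. ennreal (normal_density 0 \<bar>z j\<bar> x))"
    if "j \<in> J" for j
  proof -
    have "(s, j) \<in> {..<n} \<times> {..<d}" "z j \<noteq> 0" using that s by (auto simp: J_def)
    then have "distributed (gauss_samples n d) lborel (\<lambda>\<omega>. 0 + z j * \<omega> (s, j))
        (\<lambda>x. ennreal (normal_density (0 + z j * 0) (\<bar>z j\<bar> * 1) x))"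
      by (intro normal_density_affine gauss_samples_coord_distributed) auto
    then show ?thesis by simp
  qed
  then have "distributed (gauss_samples n d) lborel (\<lambda>\<omega>. \<Sum>j\<in>J. z j * \<omega> (s, j))
     (\<lambda>x. ennreal (normal_density (\<Sum>j\<in>J. 0) (sqrt (\<Sum>j\<in>J. \<bar>z j\<bar>\<^sup>2)) x))"
    by (intro sum_indep_normal[OF J indep]) (auto simp: J_def)
  moreover have "(\<lambda>\<omega>. \<Sum>j\<in>J. z j * \<omega> (s, j)) = (\<lambda>\<omega>. \<Sum>j<d. z j * \<omega> (s, j))"
    by (rule ext, rule sum.mono_neutral_left) (auto simp: J_def)
  moreover have "(\<Sum>j\<in>J. \<bar>z j\<bar>\<^sup>2) = (\<Sum>j<d. (z j)\<^sup>2)"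
    by (simp, rule sum.mono_neutral_left) (auto simp: J_def)
  ultimately show ?thesis by simp
qed

lemma sample_terms_indep:
  assumes n: "0 < n" and d: "0 < d"
  shows "prob_space.indep_vars (gauss_samples n d) (\<lambda>_. borel)
     (\<lambda>s \<omega>. exp (b * ((\<Sum>j<d. z j * \<omega> (s, j))\<^sup>2 - r))) {..<n}"
proof -
  interpret prob_space "gauss_samples n d" by (rule prob_space_gauss_samples)
  have "indep_vars (\<lambda>s. PiM ({s} \<times> {..<d}) (\<lambda>_. borel)) (\<lambda>s \<omega>. restrict (\<lambda>i. \<omega> i) ({s} \<times> {..<d})) {..<n}"
    by (rule indep_vars_restrict[OF gauss_samples_coords_indep[OF n d]]) (auto simp: disjoint_family_on_def)
  then have "indep_vars (\<lambda>_. borel)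
      (\<lambda>s \<omega>. (\<lambda>f. exp (b * ((\<Sum>j<d. z j * f (s, j))\<^sup>2 - r))) (restrict (\<lambda>i. \<omega> i) ({s} \<times> {..<d}))) {..<n}"
    by (rule indep_vars_compose2) measurable
  moreover have "(\<Sum>j<d. z j * restrict (\<lambda>i. \<omega> i) ({s} \<times> {..<d}) (s, j)) = (\<Sum>j<d. z j * \<omega> (s, j))" for s \<omega>
    by (rule sum.cong) auto
  ultimately show ?thesis by simp
qed

lemma sample_term_integral:
  assumes n: "0 < n" and d: "0 < d" and s: "s < n" and r: "0 < r" and r_def: "r = (\<Sum>j<d. (z j)\<^sup>2)"
    and b: "\<bar>b * r\<bar> \<le> 1/4"
  shows "integrable (gauss_samples n d) (\<lambda>\<omega>. exp (b * ((\<Sum>j<d. z j * \<omega> (s, j))\<^sup>2 - r)))"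
    and "(\<integral>\<omega>. exp (b * ((\<Sum>j<d. z j * \<omega> (s, j))\<^sup>2 - r)) \<partial>gauss_samples n d)
        = exp (- (b * r)) / sqrt (1 - 2 * (b * r))"
proof -
  have distr: "distributed (gauss_samples n d) lborel (\<lambda>\<omega>. \<Sum>j<d. z j * \<omega> (s, j))
           (\<lambda>x. ennreal (normal_density 0 (sqrt r) x))"
    using sample_linear_comb_distributed[OF n d s] r unfolding r_def by simp
  have "0 < 1 - 2 * b * (sqrt r)\<^sup>2" using b r by (auto simp: abs_le_iff)
  from has_bochner_integral_normal_exp_sq[OF _ this]
  have "has_bochner_integral lborel (\<lambda>x. exp (- (b * r)) * (normal_density 0 (sqrt r) x * exp (b * x\<^sup>2)))
            (exp (- (b * r)) * (1 / sqrt (1 - 2 * b * r)))"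
    using r by (intro has_bochner_integral_mult_right) simp
  moreover have "(\<lambda>x. exp (- (b * r)) * (normal_density 0 (sqrt r) x * exp (b * x\<^sup>2)))
      = (\<lambda>x. normal_density 0 (sqrt r) x * exp (b * (x\<^sup>2 - r)))"
    by (auto simp: right_diff_distrib exp_diff exp_minus field_simps)
  ultimately have H: "has_bochner_integral lborel (\<lambda>x. normal_density 0 (sqrt r) x * exp (b * (x\<^sup>2 - r)))
            (exp (- (b * r)) / sqrt (1 - 2 * (b * r)))"
    by (simp add: mult.assoc)
  have meas: "(\<lambda>x. exp (b * (x\<^sup>2 - r))) \<in> borel_measurable lborel" by measurable
  show "integrable (gauss_samples n d) (\<lambda>\<omega>. exp (b * ((\<Sum>j<d. z j * \<omega> (s, j))\<^sup>2 - r)))"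
    using distributed_integrable[OF distr meas] H by (auto simp: has_bochner_integral_iff)
  show "(\<integral>\<omega>. exp (b * ((\<Sum>j<d. z j * \<omega> (s, j))\<^sup>2 - r)) \<partial>gauss_samples n d)
        = exp (- (b * r)) / sqrt (1 - 2 * (b * r))"
    using distributed_integral[OF distr meas] H by (simp add: has_bochner_integral_iff)
qed

lemma quad_dev_mgf_eq:
  assumes n: "0 < n" and d: "0 < d" and r_def: "r = (\<Sum>j<d. (z j)\<^sup>2)" and r: "0 < r"
    and \<mu>: "\<bar>\<mu>\<bar> * r \<le> real n / 4"
  shows "integrable (gauss_samples n d) (\<lambda>\<omega>. exp (\<mu> * quad_dev n d z \<omega>))"
    and "(\<integral>\<omega>. exp (\<mu> * quad_dev n d z \<omega>) \<partial>gauss_samples n d)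
        = (exp (- (\<mu> / n * r)) / sqrt (1 - 2 * (\<mu> / n * r))) ^ n"
proof -
  interpret prob_space "gauss_samples n d" by (rule prob_space_gauss_samples)
  define b where "b = \<mu> / real n"
  have br: "\<bar>b * r\<bar> \<le> 1/4"
    using \<mu> n r unfolding b_def by (simp add: abs_mult field_simps)
  define Y where "Y = (\<lambda>(s::nat) (\<omega>::nat \<times> nat \<Rightarrow> real). exp (b * ((\<Sum>j<d. z j * \<omega> (s, j))\<^sup>2 - r)))"
  have prod: "(\<lambda>\<omega>. exp (\<mu> * quad_dev n d z \<omega>)) = (\<lambda>\<omega>. \<Prod>s<n. Y s \<omega>)"
    unfolding quad_dev_def b_def Y_def r_def[symmetric] by (simp add: sum_distrib_left exp_sum)
  have indep: "indep_vars (\<lambda>_. borel) Y {..<n}" unfolding Y_def by (rule sample_terms_indep[OF n d])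
  have Y: "integrable (gauss_samples n d) (Y s)"
    "(\<integral>\<omega>. Y s \<omega> \<partial>gauss_samples n d) = exp (- (b * r)) / sqrt (1 - 2 * (b * r))"
    if "s \<in> {..<n}" for s
    using sample_term_integral[OF n d _ r r_def br, of s] that unfolding Y_def by auto
  show "integrable (gauss_samples n d) (\<lambda>\<omega>. exp (\<mu> * quad_dev n d z \<omega>))"
    unfolding prod by (rule indep_vars_integrable[OF _ indep]) (use Y in auto)
  have "(\<integral>\<omega>. (\<Prod>s<n. Y s \<omega>) \<partial>gauss_samples n d) = (\<Prod>s<n. \<integral>\<omega>. Y s \<omega> \<partial>gauss_samples n d)"
    by (rule indep_vars_lebesgue_integral[OF _ indep]) (use Y in auto)
  then show "(\<integral>\<omega>. exp (\<mu> * quad_dev n d z \<omega>) \<partial>gauss_samples n d)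
        = (exp (- (\<mu> / n * r)) / sqrt (1 - 2 * (\<mu> / n * r))) ^ n"
    unfolding prod using Y by (simp add: b_def)
qed

lemma quad_dev_mgf_le:
  assumes n: "0 < n" and d: "0 < d" and r_def: "r = (\<Sum>j<d. (z j)\<^sup>2)"
    and \<mu>: "\<bar>\<mu>\<bar> * r \<le> real n / 4"
  shows "integrable (gauss_samples n d) (\<lambda>\<omega>. exp (\<mu> * quad_dev n d z \<omega>))"
    and "(\<integral>\<omega>. exp (\<mu> * quad_dev n d z \<omega>) \<partial>gauss_samples n d) \<le> exp (4 * \<mu>\<^sup>2 * r\<^sup>2 / real n)"
proof -
  interpret prob_space "gauss_samples n d" by (rule prob_space_gauss_samples)
  have "integrable (gauss_samples n d) (\<lambda>\<omega>. exp (\<mu> * quad_dev n d z \<omega>))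
    \<and> (\<integral>\<omega>. exp (\<mu> * quad_dev n d z \<omega>) \<partial>gauss_samples n d) \<le> exp (4 * \<mu>\<^sup>2 * r\<^sup>2 / real n)"
  proof (cases "r = 0")
    case True
    then have "\<forall>j<d. z j = 0" unfolding r_def by (simp add: sum_nonneg_eq_0_iff)
    then show ?thesis by (simp add: quad_dev_def prob_space)
  next
    case False
    then have r: "0 < r" unfolding r_def by (simp add: less_le sum_nonneg)
    define b where "b = \<mu> / n * r"
    have br: "\<bar>b\<bar> \<le> 1/4" using \<mu> n r unfolding b_def by (simp add: abs_mult field_simps)
    then have "0 < 1 - 2 * b" by (simp add: abs_le_iff)
    then have "0 \<le> exp (- b) / sqrt (1 - 2 * b)" by simp
    then have "(exp (- b) / sqrt (1 - 2 * b)) ^ n \<le> (exp (4 * b\<^sup>2)) ^ n"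
      by (rule power_mono[OF centred_chi_square_mgf_le[OF br]])
    also have "\<dots> = exp (4 * \<mu>\<^sup>2 * r\<^sup>2 / real n)"
      unfolding b_def exp_of_nat_mult[symmetric] using n by (simp add: power2_eq_square field_simps)
    finally show ?thesis using quad_dev_mgf_eq[OF n d r_def r \<mu>] unfolding b_def by simp
  qed
  then show "integrable (gauss_samples n d) (\<lambda>\<omega>. exp (\<mu> * quad_dev n d z \<omega>))"
    and "(\<integral>\<omega>. exp (\<mu> * quad_dev n d z \<omega>) \<partial>gauss_samples n d) \<le> exp (4 * \<mu>\<^sup>2 * r\<^sup>2 / real n)"
    by auto
qed

lemma quad_dev_mgf_le_on_net:
  assumes n: "0 < n" and d: "0 < d" and z: "z \<in> net d"
    and \<mu>: "\<bar>\<mu>\<bar> = 2 * \<Lambda>" and \<Lambda>: "4 * \<Lambda> \<le> real n / 4"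
  shows "integrable (gauss_samples n d) (\<lambda>\<omega>. exp (\<mu> * quad_dev n d z \<omega>))"
    and "(\<integral>\<omega>. exp (\<mu> * quad_dev n d z \<omega>) \<partial>gauss_samples n d) \<le> exp (64 * \<Lambda>\<^sup>2 / real n)"
proof -
  define r where "r = (\<Sum>j<d. (z j)\<^sup>2)"
  have r: "0 \<le> r" "r \<le> 2" unfolding r_def using net_sum_sq_le[OF z] by (auto intro: sum_nonneg)
  then have "\<bar>\<mu>\<bar> * r \<le> \<bar>\<mu>\<bar> * 2" by (intro mult_left_mono) auto
  then have "\<bar>\<mu>\<bar> * r \<le> real n / 4" using \<mu> \<Lambda> by linarith
  note mgf = quad_dev_mgf_le[OF n d r_def this]
  have "\<mu>\<^sup>2 = (2 * \<Lambda>)\<^sup>2" using \<mu> by (metis power2_abs)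
  moreover have "r\<^sup>2 \<le> 2\<^sup>2" using r by (intro power_mono) auto
  ultimately have "\<mu>\<^sup>2 * r\<^sup>2 \<le> (2 * \<Lambda>)\<^sup>2 * 2\<^sup>2"
    using mult_left_mono[of "r\<^sup>2" "2\<^sup>2" "(2 * \<Lambda>)\<^sup>2"] by simp
  then have "4 * \<mu>\<^sup>2 * r\<^sup>2 / real n \<le> 64 * \<Lambda>\<^sup>2 / real n"
    by (intro divide_right_mono) (auto simp: power2_eq_square)
  then show "integrable (gauss_samples n d) (\<lambda>\<omega>. exp (\<mu> * quad_dev n d z \<omega>))"
    "(\<integral>\<omega>. exp (\<mu> * quad_dev n d z \<omega>) \<partial>gauss_samples n d) \<le> exp (64 * \<Lambda>\<^sup>2 / real n)"
    using mgf by (auto intro: order_trans)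
qed

section \<open>Random matrices\<close>

definition mat_measurable :: "nat \<Rightarrow> 'a measure \<Rightarrow> ('a \<Rightarrow> nat \<Rightarrow> nat \<Rightarrow> real) \<Rightarrow> bool" where
  "mat_measurable d M F \<longleftrightarrow> (\<forall>p<d. \<forall>q<d. (\<lambda>\<omega>. F \<omega> p q) \<in> borel_measurable M)"

lemma mat_measurable_const: "mat_measurable d M (\<lambda>\<omega>. C)"
  by (simp add: mat_measurable_def)

lemma mat_measurable_mult:
  "mat_measurable d M F \<Longrightarrow> mat_measurable d M G \<Longrightarrow> mat_measurable d M (\<lambda>\<omega>. mat_mult d (F \<omega>) (G \<omega>))"
  unfolding mat_measurable_def mat_mult_def by (auto intro!: borel_measurable_sum borel_measurable_times)

lemma mat_measurable_sub:
  "mat_measurable d M F \<Longrightarrow> mat_measurable d M G \<Longrightarrow> mat_measurable d M (\<lambda>\<omega>. mat_sub (F \<omega>) (G \<omega>))"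
  unfolding mat_measurable_def mat_sub_def by (auto intro!: borel_measurable_diff)

lemma mat_measurable_pow: "mat_measurable d M F \<Longrightarrow> mat_measurable d M (\<lambda>\<omega>. mat_pow d (F \<omega>) k)"
  by (induction k) (simp_all add: mat_measurable_const mat_measurable_mult)

lemma mat_measurable_emp_cov: "mat_measurable d (gauss_samples n d) (emp_cov n d)"
  unfolding mat_measurable_def emp_cov_def
proof (intro allI impI)
  fix p q assume "p < d" "q < d"
  then show "(\<lambda>\<omega>. 1 / real n * (\<Sum>k<n. \<omega> (k, p) * \<omega> (k, q))) \<in> borel_measurable (gauss_samples n d)"
    by (intro borel_measurable_times borel_measurable_const borel_measurable_sum)
       (auto intro!: gauss_samples_coord_measurable)
qed

lemma bilin_integral:
  assumes int: "\<And>p q. p < d \<Longrightarrow> q < d \<Longrightarrow> integrable M (\<lambda>\<omega>. F \<omega> p q)"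
  shows "integrable M (\<lambda>\<omega>. bilin d w (F \<omega>) v)"
    and "bilin d w (\<lambda>p q. \<integral>\<omega>. F \<omega> p q \<partial>M) v = (\<integral>\<omega>. bilin d w (F \<omega>) v \<partial>M)"
proof -
  have int': "integrable M (\<lambda>\<omega>. w p * F \<omega> p q * v q)" if "p < d" "q < d" for p q
    using int[OF that] by simp
  show "integrable M (\<lambda>\<omega>. bilin d w (F \<omega>) v)"
    unfolding bilin_expand by (auto intro!: Bochner_Integration.integrable_sum int')
  show "bilin d w (\<lambda>p q. \<integral>\<omega>. F \<omega> p q \<partial>M) v = (\<integral>\<omega>. bilin d w (F \<omega>) v \<partial>M)"
    unfolding bilin_expand using int'
    by (subst Bochner_Integration.integral_sum) (auto intro!: sum.cong Bochner_Integration.integrable_sum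
        simp: Bochner_Integration.integral_sum)
qed

lemma op_norm_integral_sub_le:
  assumes "prob_space M" and d: "0 < d" and P: "mat_measurable d M P" and H: "integrable M H"
    and bound: "\<And>\<omega>. op_norm d (mat_sub (P \<omega>) B) \<le> H \<omega>"
  shows "op_norm d (\<lambda>p q. (\<integral>\<omega>. P \<omega> p q \<partial>M) - B p q) \<le> (\<integral>\<omega>. H \<omega> \<partial>M)"
proof -
  interpret prob_space M by fact
  have H0: "0 \<le> H \<omega>" for \<omega> using bound[of \<omega>] op_norm_nonneg[OF d] by (meson order_trans)
  have int: "integrable M (\<lambda>\<omega>. mat_sub (P \<omega>) B p q)" if "p < d" "q < d" for p q
  proof (rule Bochner_Integration.integrable_bound[OF H])
    show "(\<lambda>\<omega>. mat_sub (P \<omega>) B p q) \<in> borel_measurable M"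
      using P that by (auto simp: mat_measurable_def mat_sub_def intro!: borel_measurable_diff)
    show "AE \<omega> in M. norm (mat_sub (P \<omega>) B p q) \<le> norm (H \<omega>)"
      using abs_entry_le_op_norm[OF that] bound H0 by (auto intro: order_trans)
  qed
  have entry: "(\<integral>\<omega>. P \<omega> p q \<partial>M) - B p q = (\<integral>\<omega>. mat_sub (P \<omega>) B p q \<partial>M)" if "p < d" "q < d" for p q
  proof -
    have "integrable M (\<lambda>\<omega>. mat_sub (P \<omega>) B p q + B p q)"
      using int[OF that] by (rule Bochner_Integration.integrable_add) simp
    then show ?thesis by (simp add: mat_sub_def prob_space)
  qed
  show ?thesis
  proof (rule op_norm_le_bilin[OF d integral_nonneg_AE[OF AE_I2[OF H0]]])
    fix v w assume v: "vec_norm d v = 1" and w: "vec_norm d w = 1"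
    have "bilin d w (\<lambda>p q. (\<integral>\<omega>. P \<omega> p q \<partial>M) - B p q) v
        = bilin d w (\<lambda>p q. \<integral>\<omega>. mat_sub (P \<omega>) B p q \<partial>M) v"
      unfolding bilin_expand using entry by (intro sum.cong refl) simp_all
    also have "\<dots> = (\<integral>\<omega>. bilin d w (mat_sub (P \<omega>) B) v \<partial>M)" by (rule bilin_integral(2)[OF int])
    also have "\<bar>\<dots>\<bar> \<le> (\<integral>\<omega>. H \<omega> \<partial>M)"
    proof (rule order_trans[OF integral_abs_bound integral_mono[OF _ H]])
      show "integrable M (\<lambda>\<omega>. \<bar>bilin d w (mat_sub (P \<omega>) B) v\<bar>)"
        by (rule integrable_abs[OF bilin_integral(1)[OF int]])
      show "\<bar>bilin d w (mat_sub (P \<omega>) B) v\<bar> \<le> H \<omega>" for \<omega>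
        using abs_bilin_le[of d w "mat_sub (P \<omega>) B" v] bound[of \<omega>] v w by simp
    qed
    finally show "\<bar>bilin d w (\<lambda>p q. (\<integral>\<omega>. P \<omega> p q \<partial>M) - B p q) v\<bar> \<le> (\<integral>\<omega>. H \<omega> \<partial>M)" .
  qed
qed

section \<open>The expansion of the expected product\<close>

definition sandwich_prod ::
  "nat \<Rightarrow> nat \<Rightarrow> (nat \<Rightarrow> nat \<Rightarrow> real) \<Rightarrow> nat \<Rightarrow> nat \<Rightarrow> (nat \<times> nat \<Rightarrow> real) \<Rightarrow> nat \<Rightarrow> nat \<Rightarrow> real" where
  "sandwich_prod n d A i j \<omega> =
     mat_mult d (mat_mult d (mat_pow d (mat_sub mat_id (mat_mult d (emp_cov n d \<omega>) A)) i) (emp_cov n d \<omega>))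
       (mat_pow d (mat_sub mat_id (mat_mult d (emp_cov n d \<omega>) A)) j)"

definition net_mgf_sum :: "nat \<Rightarrow> nat \<Rightarrow> real \<Rightarrow> (nat \<times> nat \<Rightarrow> real) \<Rightarrow> real" where
  "net_mgf_sum n d \<Lambda> \<omega> =
     (\<Sum>z\<in>net d. exp (2 * \<Lambda> * quad_dev n d z \<omega>) + exp (- (2 * \<Lambda>) * quad_dev n d z \<omega>))"

lemma exp_le_truncation:
  fixes \<theta> \<gamma> t x :: real
  assumes \<theta>: "0 \<le> \<theta>" and \<gamma>: "0 \<le> \<gamma>"
  shows "exp (\<theta> * x) \<le> exp (\<theta> * t) + exp (- \<gamma> * t) * exp ((\<theta> + \<gamma>) * x)"
proof (cases "x \<le> t")
  case True
  then have "exp (\<theta> * x) \<le> exp (\<theta> * t)" using \<theta> by (simp add: mult_left_mono)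
  then show ?thesis by (simp add: add_increasing2)
next
  case False
  have "exp (\<theta> * x) = exp (- \<gamma> * x) * exp ((\<theta> + \<gamma>) * x)" by (simp add: mult_exp_exp algebra_simps)
  also have "\<dots> \<le> exp (- \<gamma> * t) * exp ((\<theta> + \<gamma>) * x)"
    using False \<gamma> by (intro mult_right_mono) (auto simp: mult_left_mono)
  finally show ?thesis by (simp add: add_increasing)
qed

lemma exp_abs_le: "exp (c * \<bar>x\<bar>) \<le> exp (c * x) + exp (- c * x)" for c x :: real
  by (cases "0 \<le> x") (simp_all add: add_increasing add_increasing2)

lemma op_norm_emp_cov_dev_le_net:
  assumes d: "0 < d" and n: "0 < n"
  shows "\<exists>z\<in>net d. op_norm d (mat_sub (emp_cov n d \<omega>) mat_id) \<le> 2 * \<bar>quad_dev n d z \<omega>\<bar>"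
proof -
  have fin: "finite ((\<lambda>z. \<bar>quad_dev n d z \<omega>\<bar>) ` net d)" using finite_net by simp
  obtain z where z: "z \<in> net d" "\<bar>quad_dev n d z \<omega>\<bar> = Max ((\<lambda>z. \<bar>quad_dev n d z \<omega>\<bar>) ` net d)"
    using Max_in[OF fin] net_nonempty[OF d] by (metis (no_types, lifting) image_iff image_is_empty)
  have "op_norm d (mat_sub (emp_cov n d \<omega>) mat_id) \<le> 2 * \<bar>quad_dev n d z \<omega>\<bar>"
  proof (rule op_norm_le_net[OF d _ _ net_approx[OF d]])
    show "sym_mat d (mat_sub (emp_cov n d \<omega>) mat_id)"
      unfolding sym_mat_def mat_sub_def emp_cov_def mat_id_def by (auto simp: mult.commute)
    fix y assume "y \<in> net d"
    then show "\<bar>bilin d y (mat_sub (emp_cov n d \<omega>) mat_id) y\<bar> \<le> \<bar>quad_dev n d z \<omega>\<bar>"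
      using Max_ge[OF fin] z(2) by (simp add: bilin_emp_cov_sub_id[OF n])
  qed simp_all
  with z(1) show ?thesis by blast
qed

lemma exp_op_norm_emp_cov_dev_le:
  assumes d: "0 < d" and n: "0 < n" and \<theta>: "0 \<le> \<theta>" and \<gamma>: "0 \<le> \<gamma>"
  shows "exp (\<theta> * op_norm d (mat_sub (emp_cov n d \<omega>) mat_id))
     \<le> exp (\<theta> * t) + exp (- \<gamma> * t) * net_mgf_sum n d (\<theta> + \<gamma>) \<omega>"
proof -
  obtain z where z: "z \<in> net d"
    and X: "op_norm d (mat_sub (emp_cov n d \<omega>) mat_id) \<le> 2 * \<bar>quad_dev n d z \<omega>\<bar>"
    using op_norm_emp_cov_dev_le_net[OF d n] by blast
  have "exp ((\<theta> + \<gamma>) * (2 * \<bar>quad_dev n d z \<omega>\<bar>)) = exp (2 * (\<theta> + \<gamma>) * \<bar>quad_dev n d z \<omega>\<bar>)"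
    by (simp add: ac_simps)
  also have "\<dots> \<le> exp (2 * (\<theta> + \<gamma>) * quad_dev n d z \<omega>) + exp (- (2 * (\<theta> + \<gamma>)) * quad_dev n d z \<omega>)"
    by (rule exp_abs_le)
  also have "\<dots> \<le> net_mgf_sum n d (\<theta> + \<gamma>) \<omega>"
    unfolding net_mgf_sum_def by (rule member_le_sum[OF z]) (auto intro: add_nonneg_nonneg finite_net)
  finally have tail: "exp ((\<theta> + \<gamma>) * (2 * \<bar>quad_dev n d z \<omega>\<bar>)) \<le> net_mgf_sum n d (\<theta> + \<gamma>) \<omega>" .
  have "exp (\<theta> * op_norm d (mat_sub (emp_cov n d \<omega>) mat_id)) \<le> exp (\<theta> * (2 * \<bar>quad_dev n d z \<omega>\<bar>))"
    using X \<theta> by (simp add: mult_left_mono)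
  also have "\<dots> \<le> exp (\<theta> * t) + exp (- \<gamma> * t) * exp ((\<theta> + \<gamma>) * (2 * \<bar>quad_dev n d z \<omega>\<bar>))"
    by (rule exp_le_truncation[OF \<theta> \<gamma>])
  also have "\<dots> \<le> exp (\<theta> * t) + exp (- \<gamma> * t) * net_mgf_sum n d (\<theta> + \<gamma>) \<omega>"
    using tail by simp
  finally show ?thesis .
qed

lemma op_norm_sandwich_dev_le:
  assumes d: "0 < d" and n: "0 < n" and ij: "i + j = m"
    and e: "0 < op_norm d (mat_sub mat_id A)"
    and \<theta>: "\<theta> = real m * op_norm d A / op_norm d (mat_sub mat_id A) + 1" and \<gamma>: "0 \<le> \<gamma>"
  shows "op_norm d (mat_sub (sandwich_prod n d A i j \<omega>) (mat_pow d (mat_sub mat_id A) m))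
     \<le> op_norm d (mat_sub mat_id A) ^ m * (exp (\<theta> * t) + exp (- \<gamma> * t) * net_mgf_sum n d (\<theta> + \<gamma>) \<omega> - 1)"
proof -
  define e where "e = op_norm d (mat_sub mat_id A)"
  define X where "X = op_norm d (mat_sub (emp_cov n d \<omega>) mat_id)"
  have A: "0 \<le> op_norm d A" and X: "0 \<le> X" using op_norm_nonneg[OF d] by (auto simp: X_def)
  then have \<theta>0: "0 \<le> \<theta>" using \<theta> e by simp
  have "op_norm d (mat_sub (sandwich_prod n d A i j \<omega>) (mat_pow d (mat_sub mat_id A) m))
      \<le> (e + X * op_norm d A) ^ m * (1 + X) - e ^ m"
    unfolding sandwich_prod_def e_def X_def by (rule op_norm_perturbed_product_le[OF d ij])
  also have "\<dots> \<le> e ^ m * exp (\<theta> * X) - e ^ m"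
    using perturbed_power_le_exp[of e "op_norm d A" X m] e A X unfolding \<theta> e_def by simp
  also have "\<dots> = e ^ m * (exp (\<theta> * X) - 1)" by (simp add: right_diff_distrib)
  also have "\<dots> \<le> e ^ m * (exp (\<theta> * t) + exp (- \<gamma> * t) * net_mgf_sum n d (\<theta> + \<gamma>) \<omega> - 1)"
    using exp_op_norm_emp_cov_dev_le[OF d n \<theta>0 \<gamma>, of \<omega> t] e
    unfolding X_def e_def by (intro mult_left_mono) simp_all
  finally show ?thesis by (simp add: e_def)
qed

lemma net_mgf_sum_integral_le:
  assumes n: "0 < n" and d: "0 < d" and \<Lambda>: "0 \<le> \<Lambda>" "4 * \<Lambda> \<le> real n / 4"
  shows "integrable (gauss_samples n d) (net_mgf_sum n d \<Lambda>)"
    and "(\<integral>\<omega>. net_mgf_sum n d \<Lambda> \<omega> \<partial>gauss_samples n d) \<le> 2 * exp (11 * real d) * exp (64 * \<Lambda>\<^sup>2 / real n)"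
proof -
  note mgf = quad_dev_mgf_le_on_net[OF n d _ _ \<Lambda>(2)]
  have int: "integrable (gauss_samples n d) (\<lambda>\<omega>. exp (2 * \<Lambda> * quad_dev n d z \<omega>))"
    "integrable (gauss_samples n d) (\<lambda>\<omega>. exp (- (2 * \<Lambda>) * quad_dev n d z \<omega>))"
    if "z \<in> net d" for z
    using mgf(1)[OF that, of "2 * \<Lambda>"] mgf(1)[OF that, of "- (2 * \<Lambda>)"] \<Lambda> by simp_all
  then show "integrable (gauss_samples n d) (net_mgf_sum n d \<Lambda>)"
    unfolding net_mgf_sum_def by (auto intro!: Bochner_Integration.integrable_sum Bochner_Integration.integrable_add)
  have "(\<integral>\<omega>. net_mgf_sum n d \<Lambda> \<omega> \<partial>gauss_samples n d)
      = (\<Sum>z\<in>net d. (\<integral>\<omega>. exp (2 * \<Lambda> * quad_dev n d z \<omega>) \<partial>gauss_samples n d)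
                    + (\<integral>\<omega>. exp (- (2 * \<Lambda>) * quad_dev n d z \<omega>) \<partial>gauss_samples n d))"
    unfolding net_mgf_sum_def using int
    by (subst Bochner_Integration.integral_sum) (auto intro!: sum.cong Bochner_Integration.integrable_add)
  also have "\<dots> \<le> (\<Sum>z\<in>net d. 2 * exp (64 * \<Lambda>\<^sup>2 / real n))"
  proof (rule sum_mono)
    fix z assume z: "z \<in> net d"
    show "(\<integral>\<omega>. exp (2 * \<Lambda> * quad_dev n d z \<omega>) \<partial>gauss_samples n d)
        + (\<integral>\<omega>. exp (- (2 * \<Lambda>) * quad_dev n d z \<omega>) \<partial>gauss_samples n d) \<le> 2 * exp (64 * \<Lambda>\<^sup>2 / real n)"
      using mgf(2)[OF z, of "2 * \<Lambda>"] mgf(2)[OF z, of "- (2 * \<Lambda>)"] \<Lambda> by simp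
  qed
  also have "\<dots> \<le> exp (11 * real d) * (2 * exp (64 * \<Lambda>\<^sup>2 / real n))"
    using card_net_le[of d] by (simp add: mult_right_mono)
  finally show "(\<integral>\<omega>. net_mgf_sum n d \<Lambda> \<omega> \<partial>gauss_samples n d) \<le> 2 * exp (11 * real d) * exp (64 * \<Lambda>\<^sup>2 / real n)"
    by simp
qed

lemma mat_measurable_sandwich_prod: "mat_measurable d (gauss_samples n d) (sandwich_prod n d A i j)"
  unfolding sandwich_prod_def
  by (intro mat_measurable_mult mat_measurable_pow mat_measurable_sub mat_measurable_emp_cov mat_measurable_const)

lemma expected_sandwich_expansion:
  assumes d: "0 < d" and n: "0 < n" and ij: "i + j = m"
    and e: "0 < op_norm d (mat_sub mat_id A)"
    and \<theta>: "\<theta> = real m * op_norm d A / op_norm d (mat_sub mat_id A) + 1" and \<gamma>: "0 \<le> \<gamma>"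
    and \<Lambda>: "4 * (\<theta> + \<gamma>) \<le> real n / 4"
  shows "\<exists>\<Delta>. (\<forall>p<d. \<forall>q<d. mat_expect n d (sandwich_prod n d A i j) p q
              = mat_pow d (mat_sub mat_id A) m p q + op_norm d (mat_sub mat_id A) ^ m * \<Delta> p q)
         \<and> op_norm d \<Delta> \<le> exp (\<theta> * t) - 1 + exp (- \<gamma> * t) * (2 * exp (11 * real d) * exp (64 * (\<theta> + \<gamma>)\<^sup>2 / real n))"
proof -
  interpret prob_space "gauss_samples n d" by (rule prob_space_gauss_samples)
  define e where "e = op_norm d (mat_sub mat_id A)"
  define B where "B = mat_pow d (mat_sub mat_id A) m"
  define K where "K = exp (\<theta> * t) - 1 + exp (- \<gamma> * t) * (2 * exp (11 * real d) * exp (64 * (\<theta> + \<gamma>)\<^sup>2 / real n))"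
  define H where "H = (\<lambda>\<omega>. e ^ m * (exp (\<theta> * t) + exp (- \<gamma> * t) * net_mgf_sum n d (\<theta> + \<gamma>) \<omega> - 1))"
  define \<Delta> where "\<Delta> = (\<lambda>p q. (1 / e ^ m) * (mat_expect n d (sandwich_prod n d A i j) p q - B p q))"
  have e0: "0 < e" using e by (simp add: e_def)
  have "0 \<le> \<theta> + \<gamma>" using \<theta> e \<gamma> op_norm_nonneg[OF d, of A] by simp
  note mgf = net_mgf_sum_integral_le[OF n d this \<Lambda>]
  have "op_norm d (\<lambda>p q. mat_expect n d (sandwich_prod n d A i j) p q - B p q) \<le> (\<integral>\<omega>. H \<omega> \<partial>gauss_samples n d)"
    unfolding mat_expect_def
  proof (rule op_norm_integral_sub_le[OF prob_space_gauss_samples d mat_measurable_sandwich_prod])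
    show "integrable (gauss_samples n d) H" unfolding H_def using mgf(1) by simp
    show "op_norm d (mat_sub (sandwich_prod n d A i j \<omega>) B) \<le> H \<omega>" for \<omega>
      unfolding B_def H_def e_def by (rule op_norm_sandwich_dev_le[OF d n ij e \<theta> \<gamma>])
  qed
  also have "(\<integral>\<omega>. H \<omega> \<partial>gauss_samples n d)
      = e ^ m * (exp (\<theta> * t) - 1 + exp (- \<gamma> * t) * (\<integral>\<omega>. net_mgf_sum n d (\<theta> + \<gamma>) \<omega> \<partial>gauss_samples n d))"
    unfolding H_def using mgf(1) by (simp add: prob_space)
  also have "\<dots> \<le> e ^ m * K"
    unfolding K_def using mgf(2) e0 by (intro mult_left_mono add_left_mono) simp_all
  finally have E: "op_norm d (\<lambda>p q. mat_expect n d (sandwich_prod n d A i j) p q - B p q) \<le> e ^ m * K" .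
  have "op_norm d \<Delta> \<le> (1 / e ^ m) * op_norm d (\<lambda>p q. mat_expect n d (sandwich_prod n d A i j) p q - B p q)"
    unfolding \<Delta>_def using e0 by (intro op_norm_scale_le[OF d]) simp
  also have "\<dots> \<le> (1 / e ^ m) * (e ^ m * K)" using E e0 by (intro mult_left_mono) simp_all
  also have "\<dots> = K" using e0 by simp
  finally have "op_norm d \<Delta> \<le> K" .
  moreover have "mat_expect n d (sandwich_prod n d A i j) p q = B p q + e ^ m * \<Delta> p q" for p q
    using e0 by (simp add: \<Delta>_def)
  ultimately show ?thesis unfolding B_def e_def K_def by blast
qed


section \<open>Choice of parameters\<close>

lemma two_exp_neg_le_inv_ln:
  fixes D :: real
  assumes D: "1 < D"
  shows "2 * exp (- 33 * D) \<le> 1 / ln D"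
proof -
  have l: "0 < ln D" "ln D \<le> D" using D ln_le_minus_one[of D] by auto
  have "2 * ln D \<le> exp (33 * D)" using exp_ge_add_one_self[of "33 * D"] l D by linarith
  then have "2 / exp (33 * D) \<le> 2 / (2 * ln D)" using l by (intro divide_left_mono) auto
  then show ?thesis by (simp add: exp_minus field_simps)
qed

lemma theta_le:
  fixes a e l u L :: real
  assumes lu: "0 < l * u" and L: "1 \<le> L" and e: "L * l * u \<le> e"
    and a: "0 \<le> a" "a \<le> 1 + e" and m: "real m \<le> 2 * L"
  shows "real m * a / e + 1 \<le> 2 / (l * u) + 3 * L"
proof -
  have Llu: "0 < L * (l * u)" using L lu by simp
  then have e0: "0 < e" using e by (simp add: mult.assoc)
  have "real m * a / e \<le> 2 * L * (1 + e) / e"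
    using m a e0 L by (intro divide_right_mono mult_mono) auto
  also have "\<dots> = 2 * L / e + 2 * L" using e0 by (simp add: field_simps)
  also have "2 * L / e \<le> 2 * L / (L * l * u)"
    using e L e0 Llu by (intro divide_left_mono) (auto simp: mult.assoc)
  also have "2 * L / (L * l * u) = 2 / (l * u)" using L by (simp add: mult.assoc)
  finally show ?thesis using L by simp
qed

lemma tail_term_le:
  fixes D u \<Lambda> :: real
  assumes D: "1 < D" and u: "0 < u" and \<Lambda>: "0 \<le> \<Lambda>" "\<Lambda> \<le> 2 * D / u"
  shows "exp (- (D / u) * (300 * u)) * (2 * exp (11 * D) * exp (64 * \<Lambda>\<^sup>2 / (D / u\<^sup>2))) \<le> 1 / ln D"
proof -
  have "\<Lambda>\<^sup>2 \<le> (2 * D / u)\<^sup>2" using \<Lambda> by (intro power_mono) auto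
  then have "64 * \<Lambda>\<^sup>2 / (D / u\<^sup>2) \<le> 64 * (2 * D / u)\<^sup>2 / (D / u\<^sup>2)"
    using D u by (intro divide_right_mono) auto
  also have "\<dots> = 256 * D" using D u by (simp add: field_simps power2_eq_square)
  finally have "exp (- (D / u) * (300 * u)) * (2 * exp (11 * D) * exp (64 * \<Lambda>\<^sup>2 / (D / u\<^sup>2)))
      \<le> exp (- 300 * D) * (2 * exp (11 * D) * exp (256 * D))"
    using u by (simp add: mult.commute[of D])
  also have "\<dots> = 2 * exp (- 33 * D)" by (simp add: mult_exp_exp)
  also have "\<dots> \<le> 1 / ln D" using D by (rule two_exp_neg_le_inv_ln)
  finally show ?thesis .
qed

lemma sandwich_parameter_bounds:
  fixes D L u \<theta> :: real
  defines "l \<equiv> ln D"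
  assumes D: "exp 3000 \<le> D" and L: "1 \<le> L" and u: "0 < u" and Lu: "L * l * u \<le> 1"
    and \<theta>: "0 \<le> \<theta>" "\<theta> \<le> 2 / (l * u) + 3 * L"
  shows "4 * (\<theta> + D / u) \<le> (D / u\<^sup>2) / 4"
    and "exp (\<theta> * (300 * u)) - 1
         + exp (- (D / u) * (300 * u)) * (2 * exp (11 * D) * exp (64 * (\<theta> + D / u)\<^sup>2 / (D / u\<^sup>2)))
       \<le> 3001 / l"
proof -
  have D1: "3001 \<le> D" using D exp_ge_add_one_self[of 3000] by linarith
  have "exp 3000 \<le> exp l" unfolding l_def using D D1 by simp
  then have l: "3000 \<le> l" by simp
  have Lu': "L * u \<le> 1 / l" using Lu l by (simp add: field_simps)
  have "u \<le> L * u" using L u by simp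
  also have "\<dots> \<le> 1 / l" by (rule Lu')
  also have "\<dots> \<le> 1 / 3000" using l by (simp add: divide_left_mono)
  finally have u_small: "u \<le> 1 / 3000" .
  have "\<theta> \<le> 2 / (l * u) + 3 / (l * u)" using \<theta>(2) Lu' u l by (simp add: field_simps)
  also have "\<dots> \<le> 1 / u" using l u by (simp add: field_simps)
  finally have \<Lambda>: "\<theta> + D / u \<le> 2 * D / u" using D1 u by (simp add: field_simps)
  show "4 * (\<theta> + D / u) \<le> (D / u\<^sup>2) / 4"
  proof -
    have "8 * D * u \<le> D / 4" using u_small D1 by simp
    then have "8 * D / u \<le> (D / u\<^sup>2) / 4" using u by (simp add: field_simps power2_eq_square)
    then show ?thesis using \<Lambda> by simp
  qed
  have "\<theta> * (300 * u) \<le> (2 / (l * u) + 3 * L) * (300 * u)" using \<theta> u by (intro mult_right_mono) auto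
  also have "\<dots> = 600 / l + 900 * (L * u)" using u l by (simp add: field_simps)
  also have "\<dots> \<le> 1500 / l" using Lu' by simp
  finally have x: "\<theta> * (300 * u) \<le> 1500 / l" .
  moreover have "1500 / l \<le> 1 / 2" using l by (simp add: field_simps)
  ultimately have "exp (\<theta> * (300 * u)) \<le> 1 + 2 * (\<theta> * (300 * u))"
    using \<theta> u by (intro real_exp_bound_lemma) auto
  moreover have "3000 / l = 2 * (1500 / l)" by simp
  ultimately have bulk: "exp (\<theta> * (300 * u)) - 1 \<le> 3000 / l" using x by linarith
  have "exp (- (D / u) * (300 * u)) * (2 * exp (11 * D) * exp (64 * (\<theta> + D / u)\<^sup>2 / (D / u\<^sup>2))) \<le> 1 / l"
    unfolding l_def using D1 u \<theta>(1) \<Lambda> by (intro tail_term_le) simp_all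
  then show "exp (\<theta> * (300 * u)) - 1
         + exp (- (D / u) * (300 * u)) * (2 * exp (11 * D) * exp (64 * (\<theta> + D / u)\<^sup>2 / (D / u\<^sup>2)))
       \<le> 3001 / l"
    using bulk by simp
qed


lemma sample_size_consequences:
  fixes D L n :: real
  assumes D: "exp 3000 \<le> D" and L: "1 \<le> L" and n: "D * L\<^sup>2 * (ln D)\<^sup>2 \<le> n"
  shows "0 < n" and "L * ln D * sqrt (D / n) \<le> 1"
    and "sqrt (L\<^sup>2 * D * (ln D)\<^sup>2 / n) = L * ln D * sqrt (D / n)"
proof -
  have D0: "0 < D" using D by (meson exp_gt_zero less_le_trans)
  have "1 < exp (3000::real)" by simp
  then have "1 < D" using D by linarith
  then have l: "0 < ln D" by simp
  then show n0: "0 < n" using n D0 L by (smt (verit) mult_pos_pos zero_less_power)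
  have eq: "L\<^sup>2 * D * (ln D)\<^sup>2 / n = (L * ln D)\<^sup>2 * (D / n)" by (simp add: power_mult_distrib)
  show sq: "sqrt (L\<^sup>2 * D * (ln D)\<^sup>2 / n) = L * ln D * sqrt (D / n)"
    unfolding eq real_sqrt_mult using L l by simp
  have "L\<^sup>2 * D * (ln D)\<^sup>2 / n \<le> 1" using n n0 by (simp add: divide_le_eq ac_simps)
  then show "L * ln D * sqrt (D / n) \<le> 1" unfolding sq[symmetric] by simp
qed

lemma expected_sandwich_expansion_explicit:
  assumes d: "exp 3000 \<le> real d" and L: "1 \<le> L"
    and n: "real d * real L ^ 2 * (ln (real d))\<^sup>2 \<le> real n"
    and e: "sqrt (real L ^ 2 * real d * (ln (real d))\<^sup>2 / real n) \<le> op_norm d (mat_sub mat_id A)"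
    and i: "i \<le> 2 * L - 1"
  shows "\<exists>\<Delta>. (\<forall>p<d. \<forall>q<d. mat_expect n d (sandwich_prod n d A i (2 * L - 1 - i)) p q
              = mat_pow d (mat_sub mat_id A) (2 * L - 1) p q + op_norm d (mat_sub mat_id A) ^ (2 * L - 1) * \<Delta> p q)
         \<and> op_norm d \<Delta> \<le> 3001 / ln (real d)"
proof -
  define l u e where "l = ln (real d)" and "u = sqrt (real d / real n)"
    and "e = op_norm d (mat_sub mat_id A)"
  define \<theta> where "\<theta> = real (2 * L - 1) * op_norm d A / e + 1"
  note size = sample_size_consequences[OF d, of "real L" "real n"]
  have "1 < exp (3000::real)" by simp
  then have "1 < real d" using d by linarith
  then have d0: "0 < d" and l: "0 < l" by (simp_all add: l_def)
  have n0: "0 < n" and u: "0 < u" and n_eq: "real d / u\<^sup>2 = real n"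
    using size(1) L n d0 by (auto simp: u_def)
  have Lu: "real L * l * u \<le> 1" and Le: "real L * l * u \<le> e"
    using size(2,3) L n e by (simp_all add: l_def u_def e_def)
  have "0 < real L * l * u" using L l u by simp
  then have e0: "0 < e" using Le by linarith
  have "op_norm d A \<le> op_norm d mat_id + e"
    using op_norm_sub[OF d0, of mat_id "mat_sub mat_id A"] by (simp add: mat_sub_def e_def)
  then have A: "op_norm d A \<le> 1 + e" using op_norm_id_le[OF d0] by linarith
  have \<theta>0: "0 \<le> \<theta>" unfolding \<theta>_def using e0 op_norm_nonneg[OF d0, of A] by simp
  have "real (2 * L - 1) \<le> 2 * real L" by simp
  then have \<theta>1: "\<theta> \<le> 2 / (l * u) + 3 * real L"
    unfolding \<theta>_def using l u L by (intro theta_le[OF _ _ Le op_norm_nonneg[OF d0] A]) simp_all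
  have "1 \<le> real L" using L by simp
  note bounds = sandwich_parameter_bounds[OF d this u Lu[unfolded l_def] \<theta>0 \<theta>1[unfolded l_def],
      unfolded n_eq, folded l_def]
  have "i + (2 * L - 1 - i) = 2 * L - 1" using i by simp
  moreover have "0 \<le> real d / u" using u by simp
  moreover have "4 * (\<theta> + real d / u) \<le> real n / 4" using bounds(1) by simp
  ultimately obtain \<Delta> where
    "\<forall>p<d. \<forall>q<d. mat_expect n d (sandwich_prod n d A i (2 * L - 1 - i)) p q
              = mat_pow d (mat_sub mat_id A) (2 * L - 1) p q + e ^ (2 * L - 1) * \<Delta> p q"
    and "op_norm d \<Delta> \<le> exp (\<theta> * (300 * u)) - 1
         + exp (- (real d / u) * (300 * u)) * (2 * exp (11 * real d) * exp (64 * (\<theta> + real d / u)\<^sup>2 / real n))"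
    using expected_sandwich_expansion[OF d0 n0 _ e0[unfolded e_def] \<theta>_def[unfolded e_def], of i]
    unfolding e_def by blast
  moreover have "\<dots> \<le> 3001 / l" using bounds(2) by simp
  ultimately show ?thesis unfolding e_def l_def by auto
qed

theorem lemmaA4:
  shows "\<exists>C0 (k::nat) c C1 (d0::nat). \<forall>d n L A i.
     d \<ge> d0 \<longrightarrow> L \<ge> 1 \<longrightarrow>
     real n \<ge> C0 * real d * real L ^ 2 * (ln (real d)) ^ k \<longrightarrow>
     sym_mat d A \<longrightarrow>
     op_norm d (mat_sub mat_id A) \<ge> c * sqrt (real L ^ 2 * real d * (ln (real d))\<^sup>2 / real n) \<longrightarrow>
     i \<le> 2 * L - 1 \<longrightarrow>
     (\<exists>\<Delta>. (\<forall>p<d. \<forall>q<d.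
         mat_expect n d (\<lambda>\<omega>. mat_mult d (mat_mult d (mat_pow d (mat_sub mat_id (mat_mult d (emp_cov n d \<omega>) A)) i)
                                          (emp_cov n d \<omega>))
                                (mat_pow d (mat_sub mat_id (mat_mult d (emp_cov n d \<omega>) A)) (2 * L - 1 - i))) p q
         = mat_pow d (mat_sub mat_id A) (2 * L - 1) p q
           + op_norm d (mat_sub mat_id A) ^ (2 * L - 1) * \<Delta> p q)
       \<and> op_norm d \<Delta> \<le> C1 / ln (real d))"
proof (rule exI[of _ 1], rule exI[of _ 2], rule exI[of _ 1], rule exI[of _ 3001],
    rule exI[of _ "nat \<lceil>exp 3000\<rceil>"], intro allI impI)
  fix d n L A i
  assume "nat \<lceil>exp (3000::real)\<rceil> \<le> d" and "1 \<le> L"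
    and "1 * real d * real L ^ 2 * ln (real d) ^ 2 \<le> real n"
    and "1 * sqrt (real L ^ 2 * real d * (ln (real d))\<^sup>2 / real n) \<le> op_norm d (mat_sub mat_id A)"
    and "i \<le> 2 * L - 1"
  then show "\<exists>\<Delta>. (\<forall>p<d. \<forall>q<d.
         mat_expect n d (\<lambda>\<omega>. mat_mult d (mat_mult d (mat_pow d (mat_sub mat_id (mat_mult d (emp_cov n d \<omega>) A)) i)
                                          (emp_cov n d \<omega>))
                                (mat_pow d (mat_sub mat_id (mat_mult d (emp_cov n d \<omega>) A)) (2 * L - 1 - i))) p q
         = mat_pow d (mat_sub mat_id A) (2 * L - 1) p q
           + op_norm d (mat_sub mat_id A) ^ (2 * L - 1) * \<Delta> p q)
       \<and> op_norm d \<Delta> \<le> 3001 / ln (real d)"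
    using expected_sandwich_expansion_explicit[of d L n A i] unfolding sandwich_prod_def by simp
qed

end
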